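(* Consider the generalized Pólya urn with $A\ge2$ agents constructed via the exponential embedding. Suppose the set $M=\{i\in[A]:\sum_{k=1}^\infty1/F_i(k)<\infty\}$ is non-empty but $1\notin M$. Assume moreover $\lim_{k\to\infty}F_1(k)=\infty$ and that $F_i$ is strictly monotone for every $i\in M$. Then $$-\log\mathbb{P}(X_1(\infty)>x)\sim d\sum_{k=X_1(0)}^x\frac{1}{F_1(k)}\quad\text{as }x\to\infty,\qquad\text{where } d=\sum_{i\in M}F_i(X_i(0)).$$
   Context: $\mathbb{N}=\{1,2,\dots\}$, $[A]=\{1,\dots,A\}$, $e^{(i)}$ the $i$-th unit vector. For $i\in[A]$, $F_i\colon\mathbb{N}\to(0,\infty)$ and $X_i(0)\in\mathbb{N}$. Let $\Xi_1,\dots,\Xi_A$ be independent pure birth processes: $\Xi_i$ has independent sojourn times $\tau_i(k)$, $k\ge X_i(0)$, exponential with rate $F_i(k)$, and $\Xi_i(t)=\min\{k:\sum_{l=X_i(0)}^k\tau_i(l)>t\}$ (min of empty set $=\infty$). With $\Xi=(\Xi_1,\dots,\Xi_A)$, $t_0=0$, $t_{n+1}=\inf\{t>t_n:\Xi(t)\ne\Xi(t_n)\}$, the urn is $X(n)=\Xi(t_n)$, a Markov chain with $\mathbb{P}(X(n+1)-X(n)=e^{(i)}\mid X(n))=F_i(X_i(n))/\sum_jF_j(X_j(n))$; $X_1(\infty)=\lim_nX_1(n)$. $f\sim h$ means $f/h\to1$. *)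

theory Defs
  imports "HOL-Probability.Probability" "HOL-Library.Landau_Symbols"
begin

text \<open>Exponential embedding. tau i k is the sojourn time of agent i at level k
  (k \<ge> X0 i). Xi i t is the pure birth process of agent i (value \<infinity> after explosion).\<close>

definition birth_proc :: "(nat \<Rightarrow> nat \<Rightarrow> 'a \<Rightarrow> real) \<Rightarrow> (nat \<Rightarrow> nat) \<Rightarrow> nat \<Rightarrow> real \<Rightarrow> 'a \<Rightarrow> enat" where
  "birth_proc tau X0 i t \<omega> =
     (if \<exists>k. (\<Sum>l\<in>{X0 i..k}. tau i l \<omega>) > t
      then enat (LEAST k. (\<Sum>l\<in>{X0 i..k}. tau i l \<omega>) > t) else \<infinity>)"

primrec jump_time :: "(nat \<Rightarrow> nat \<Rightarrow> 'a \<Rightarrow> real) \<Rightarrow> (nat \<Rightarrow> nat) \<Rightarrow> nat \<Rightarrow> nat \<Rightarrow> 'a \<Rightarrow> real" where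
  "jump_time tau X0 A 0 \<omega> = 0"
| "jump_time tau X0 A (Suc n) \<omega> =
     Inf {s. s > jump_time tau X0 A n \<omega> \<and>
             (\<exists>i\<in>{1..A}. birth_proc tau X0 i s \<omega> \<noteq> birth_proc tau X0 i (jump_time tau X0 A n \<omega>) \<omega>)}"

definition urn :: "(nat \<Rightarrow> nat \<Rightarrow> 'a \<Rightarrow> real) \<Rightarrow> (nat \<Rightarrow> nat) \<Rightarrow> nat \<Rightarrow> nat \<Rightarrow> nat \<Rightarrow> 'a \<Rightarrow> enat" where
  "urn tau X0 A n i \<omega> = birth_proc tau X0 i (jump_time tau X0 A n \<omega>) \<omega>"

text \<open>X_i(\<infinity>) = lim_n X_i(n); the sequence is nondecreasing, so the limit is the supremum.\<close>

definition urn_limit :: "(nat \<Rightarrow> nat \<Rightarrow> 'a \<Rightarrow> real) \<Rightarrow> (nat \<Rightarrow> nat) \<Rightarrow> nat \<Rightarrow> nat \<Rightarrow> 'a \<Rightarrow> enat" where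
  "urn_limit tau X0 A i \<omega> = (SUP n. urn tau X0 A n i \<omega>)"

end

theory Submission
  imports Defs
begin

text \<open>Write \<open>d = (\<Sum>i\<in>Mset. F i (X0 i))\<close> and \<open>m x = (\<Sum>k\<in>{X0 1..x}. 1 / F 1 k)\<close>, the mean time
  agent 1 needs to leave level \<open>x\<close>. In the exponential embedding, \<open>X\<^sub>1(\<infinity>) > x\<close> means that agent 1
  leaves level \<open>x\<close> before any other agent explodes.

  Lower bound: set \<open>a = (1 + \<epsilon>) m x\<close>. With probability \<open>exp (- a d)\<close> every explosive agent
  waits longer than \<open>a\<close> at its initial level; independently, agent 1 leaves level \<open>x\<close> before
  time \<open>a\<close> with high probability (its exit time concentrates at \<open>m x\<close> because \<open>F 1 \<longrightarrow> \<infinity>\<close>), and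
  the non-explosive agents stay below a fixed level \<open>K\<close> up to time \<open>a\<close>.

  Upper bound: no explosive agent may explode before agent 1 leaves level \<open>x\<close>. An exponential
  Chernoff bound with weights \<open>\<theta> i = (1 - \<epsilon>) F i (X0 i)\<close> turns this into a product of moment
  generating functions; the factors of the explosive agents stay bounded because \<open>F i\<close> increases
  and \<open>\<Sum>k. 1 / F i k < \<infinity>\<close>, and those of agent 1 give
  \<open>\<Prod>k\<in>{X0 1..x}. F 1 k / (F 1 k + (1 - \<epsilon>) d) = exp (- (1 - \<epsilon>)\<^sup>2 d m x + O(1))\<close>.\<close>

section \<open>Exponential distributions and elementary estimates\<close>

lemma nn_integral_exponential_density: "0 < l \<Longrightarrow> (\<integral>\<^sup>+x. ennreal (exponential_density l x) \<partial>lborel) = 1"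
  using prob_space.emeasure_space_1[OF prob_space_exponential_density, of l]
  by (simp add: emeasure_density)

lemma (in prob_space) exponential_distributed_integral_exp:
  assumes D: "distributed M lborel X (exponential_density l)" and l: "0 < l" and c: "c < l"
  shows "integrable M (\<lambda>\<omega>. exp (c * X \<omega>))"
    and "(\<integral>\<omega>. exp (c * X \<omega>) \<partial>M) = l / (l - c)"
proof -
  have [measurable]: "X \<in> borel_measurable M"
    using distributed_measurable[OF D] by simp
  have tilt: "ennreal (exponential_density l x) * ennreal (exp (c * x)) =
              ennreal (l / (l - c)) * ennreal (exponential_density (l - c) x)" for x
  proof (cases "x < 0")
    case False
    have "exp (- x * (l - c)) = exp (- x * l) * exp (c * x)"
      by (simp add: exp_add[symmetric] algebra_simps)
    then show ?thesis using False l c by (simp add: exponential_density_def ennreal_mult[symmetric])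
  qed (simp add: exponential_density_def)
  have "(\<integral>\<^sup>+\<omega>. ennreal (exp (c * X \<omega>)) \<partial>M) =
        (\<integral>\<^sup>+x. ennreal (exponential_density l x) * ennreal (exp (c * x)) \<partial>lborel)"
    using distributed_nn_integral[OF D, of "\<lambda>x. ennreal (exp (c * x))"] by simp
  also have "\<dots> = ennreal (l / (l - c)) * (\<integral>\<^sup>+x. ennreal (exponential_density (l - c) x) \<partial>lborel)"
    unfolding tilt by (rule nn_integral_cmult) measurable
  also have "\<dots> = ennreal (l / (l - c))" using c by (simp add: nn_integral_exponential_density)
  finally have nn: "(\<integral>\<^sup>+\<omega>. ennreal (exp (c * X \<omega>)) \<partial>M) = ennreal (l / (l - c))" .
  show "integrable M (\<lambda>\<omega>. exp (c * X \<omega>))"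
    by (rule integrableI_nn_integral_finite[OF _ _ nn]) auto
  show "(\<integral>\<omega>. exp (c * X \<omega>) \<partial>M) = l / (l - c)"
    using l c by (subst integral_eq_nn_integral) (auto simp: nn)
qed

lemma (in prob_space) exponential_distributed_integral_indicator_gt:
  assumes D: "distributed M lborel X (exponential_density l)" and l: "0 < l" and a: "0 \<le> a"
  shows "integrable M (\<lambda>\<omega>. indicator {a<..} (X \<omega>) :: real)"
    and "(\<integral>\<omega>. indicator {a<..} (X \<omega>) \<partial>M) = exp (- a * l)"
proof -
  have [measurable]: "X \<in> borel_measurable M"
    using distributed_measurable[OF D] by simp
  show "integrable M (\<lambda>\<omega>. indicator {a<..} (X \<omega>) :: real)"
    by (rule integrable_const_bound[where B=1]) (auto simp: indicator_def)
  have "(\<integral>\<omega>. indicator {a<..} (X \<omega>) \<partial>M) = (\<integral>\<omega>. indicator {\<omega>\<in>space M. a < X \<omega>} \<omega> \<partial>M)"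
    by (intro Bochner_Integration.integral_cong) (auto simp: indicator_def)
  also have "\<dots> = prob {\<omega>\<in>space M. a < X \<omega>}" by simp
  also have "\<dots> = exp (- a * l)" by (rule exponential_distributedD_gt[OF D a l])
  finally show "(\<integral>\<omega>. indicator {a<..} (X \<omega>) \<partial>M) = exp (- a * l)" .
qed

lemma asymp_equiv_sequentially_if_bounds:
  fixes f g :: "nat \<Rightarrow> real"
  assumes g: "filterlim g at_top sequentially"
    and upper: "\<And>\<epsilon>. 0 < \<epsilon> \<Longrightarrow> \<exists>C. eventually (\<lambda>x. f x \<le> (1 + \<epsilon>) * g x + C) sequentially"
    and lower: "\<And>\<epsilon>. 0 < \<epsilon> \<Longrightarrow> \<epsilon> < 1 \<Longrightarrow> \<exists>C. eventually (\<lambda>x. (1 - \<epsilon>) * g x - C \<le> f x) sequentially"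
  shows "f \<sim>[at_top] g"
proof (rule asymp_equivI', rule tendstoI)
  fix e :: real assume e: "0 < e"
  define \<epsilon> where "\<epsilon> = min (e / 2) (1 / 2)"
  have \<epsilon>: "0 < \<epsilon>" "\<epsilon> < 1" "\<epsilon> \<le> e / 2" using e by (auto simp: \<epsilon>_def)
  obtain C1 where C1: "eventually (\<lambda>x. f x \<le> (1 + \<epsilon>) * g x + C1) sequentially"
    using upper[OF \<epsilon>(1)] ..
  obtain C2 where C2: "eventually (\<lambda>x. (1 - \<epsilon>) * g x - C2 \<le> f x) sequentially"
    using lower[OF \<epsilon>(1,2)] ..
  have "eventually (\<lambda>x. 2 * (\<bar>C1\<bar> + \<bar>C2\<bar>) / e + 1 \<le> g x) sequentially"
    using g unfolding filterlim_at_top by blast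
  with C1 C2 show "eventually (\<lambda>x. dist (f x / g x) 1 < e) at_top"
  proof eventually_elim
    case (elim x)
    have "0 \<le> 2 * (\<bar>C1\<bar> + \<bar>C2\<bar>) / e" using e by simp
    then have "0 < g x" using elim(3) by linarith
    have "\<bar>C1\<bar> + \<bar>C2\<bar> < e / 2 * g x" using elim(3) e by (simp add: field_simps)
    moreover have "\<epsilon> * g x \<le> e / 2 * g x" using \<open>0 < g x\<close> \<epsilon>(3) by (intro mult_right_mono) auto
    moreover have "f x - g x \<le> \<epsilon> * g x + C1" "g x - f x \<le> \<epsilon> * g x + C2"
      using elim(1,2) by (simp_all add: algebra_simps)
    moreover have "e * g x = 2 * (e / 2 * g x)" by simp
    ultimately have "\<bar>f x - g x\<bar> < e * g x" by (simp only: abs_less_iff) linarith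
    then show ?case using \<open>0 < g x\<close> by (simp add: dist_real_def field_simps abs_div)
  qed
qed

lemma filterlim_sum_at_top_if_not_summable:
  fixes h :: "nat \<Rightarrow> real"
  assumes pos: "\<And>k. 1 \<le> k \<Longrightarrow> 0 < h k" and not_summable: "\<not> summable (\<lambda>k. h (Suc k))"
    and X: "1 \<le> X"
  shows "filterlim (\<lambda>n. \<Sum>k\<in>{X..n}. h k) at_top sequentially"
  unfolding filterlim_at_top eventually_sequentially
proof
  fix B
  define C where "C = (\<Sum>k\<in>{1..<X}. h k)"
  have partial_le: "(\<Sum>k<n. h (Suc k)) \<le> C + (\<Sum>k\<in>{X..n}. h k)" for n
  proof -
    have "(\<Sum>k<n. h (Suc k)) = (\<Sum>k\<in>{1..n}. h k)" by (simp add: sum.atLeast1_atMost_eq)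
    also have "\<dots> \<le> (\<Sum>k\<in>{1..<X} \<union> {X..n}. h k)" using pos X by (intro sum_mono2) (auto intro: less_imp_le)
    also have "\<dots> = C + (\<Sum>k\<in>{X..n}. h k)" unfolding C_def by (subst sum.union_disjoint) auto
    finally show ?thesis .
  qed
  have "\<exists>n. B + C < (\<Sum>k<n. h (Suc k))"
  proof (rule ccontr)
    assume "\<nexists>n. B + C < (\<Sum>k<n. h (Suc k))"
    then have "summable (\<lambda>k. h (Suc k))"
      by (intro summableI_nonneg_bounded[where x="B + C"]) (auto simp: not_less intro: less_imp_le pos[of "Suc _", simplified])
    with not_summable show False ..
  qed
  then obtain n where n: "B + C < (\<Sum>k<n. h (Suc k))" ..
  have "B \<le> (\<Sum>k\<in>{X..m}. h k)" if "n \<le> m" for m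
  proof -
    have "(\<Sum>k<n. h (Suc k)) \<le> (\<Sum>k<m. h (Suc k))"
      using that pos by (intro sum_mono2) (auto intro: less_imp_le)
    then show ?thesis using n partial_le[of m] by linarith
  qed
  then show "\<exists>n. \<forall>m\<ge>n. B \<le> (\<Sum>k\<in>{X..m}. h k)" by blast
qed

lemma not_summable_inverse_if_decreasing:
  fixes f :: "nat \<Rightarrow> real"
  assumes pos: "\<And>k. 1 \<le> k \<Longrightarrow> 0 < f k" and decr: "\<And>j k. 1 \<le> j \<Longrightarrow> j < k \<Longrightarrow> f k < f j"
  shows "\<not> summable (\<lambda>k. 1 / f (Suc k))"
proof
  assume "summable (\<lambda>k. 1 / f (Suc k))"
  then have "(\<lambda>k. 1 / f (Suc k)) \<longlonglongrightarrow> 0" by (rule summable_LIMSEQ_zero)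
  then have "eventually (\<lambda>k. 1 / f (Suc k) < 1 / f 1) sequentially"
    using pos[of 1] by (intro order_tendstoD(2)) auto
  then obtain k0 where "\<forall>k\<ge>k0. 1 / f (Suc k) < 1 / f 1"
    unfolding eventually_sequentially by blast
  then have "1 / f (Suc (Suc k0)) < 1 / f 1" by simp
  moreover have "1 / f 1 < 1 / f (Suc (Suc k0))"
    using decr[of 1 "Suc (Suc k0)"] pos[of "Suc (Suc k0)"] by (simp add: frac_less2)
  ultimately show False by simp
qed

lemma eventually_le_imp_sum_le_plus_const:
  fixes u v :: "nat \<Rightarrow> real"
  assumes u: "\<And>k. X \<le> k \<Longrightarrow> 0 \<le> u k" and v: "\<And>k. X \<le> k \<Longrightarrow> 0 \<le> v k"
    and "eventually (\<lambda>k. u k \<le> v k) sequentially"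
  shows "\<exists>C. \<forall>x. (\<Sum>k\<in>{X..x}. u k) \<le> C + (\<Sum>k\<in>{X..x}. v k)"
proof -
  obtain k0 where k0: "\<And>k. k0 \<le> k \<Longrightarrow> u k \<le> v k"
    using assms(3) unfolding eventually_sequentially by blast
  have "\<forall>x. (\<Sum>k\<in>{X..x}. u k) \<le> (\<Sum>k\<in>{X..k0}. u k) + (\<Sum>k\<in>{X..x}. v k)"
  proof
    fix x
    have split: "{X..x} = ({X..x} \<inter> {..k0}) \<union> ({X..x} \<inter> {k0<..})" by auto
    have "(\<Sum>k\<in>{X..x}. u k) = (\<Sum>k\<in>{X..x} \<inter> {..k0}. u k) + (\<Sum>k\<in>{X..x} \<inter> {k0<..}. u k)"
      by (subst split, rule sum.union_disjoint) auto
    also have "(\<Sum>k\<in>{X..x} \<inter> {..k0}. u k) \<le> (\<Sum>k\<in>{X..k0}. u k)"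
      by (rule sum_mono2) (auto intro: u)
    also have "(\<Sum>k\<in>{X..x} \<inter> {k0<..}. u k) \<le> (\<Sum>k\<in>{X..x} \<inter> {k0<..}. v k)"
      by (rule sum_mono) (auto intro: k0)
    also have "\<dots> \<le> (\<Sum>k\<in>{X..x}. v k)"
      by (rule sum_mono2) (auto intro: v)
    finally show "(\<Sum>k\<in>{X..x}. u k) \<le> (\<Sum>k\<in>{X..k0}. u k) + (\<Sum>k\<in>{X..x}. v k)" by simp
  qed
  then show ?thesis ..
qed

lemma sum_div_diff_le_plus_const:
  fixes f :: "nat \<Rightarrow> real"
  assumes f: "filterlim f at_top sequentially" and t: "0 < t" "\<And>k. X \<le> k \<Longrightarrow> t < f k" and \<delta>: "0 < \<delta>"
  shows "\<exists>C. \<forall>x. (\<Sum>k\<in>{X..x}. t / (f k - t)) \<le> C + (1 + \<delta>) * (\<Sum>k\<in>{X..x}. t / f k)"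
proof -
  have "eventually (\<lambda>k. (1 + \<delta>) * t / \<delta> \<le> f k) sequentially"
    using f unfolding filterlim_at_top by blast
  then have "eventually (\<lambda>k. t / (f k - t) \<le> (1 + \<delta>) * (t / f k)) sequentially"
  proof eventually_elim
    case (elim k)
    then have "(1 + \<delta>) * t \<le> \<delta> * f k" using \<delta> by (simp add: field_simps)
    then have "t * ((1 + \<delta>) * t) \<le> t * (\<delta> * f k)" using t(1) by (intro mult_left_mono) auto
    then have "t * f k \<le> (1 + \<delta>) * t * (f k - t)" by (simp add: algebra_simps)
    moreover have "t < (1 + \<delta>) * t / \<delta>" using t(1) \<delta> by (simp add: field_simps)
    then have "0 < f k - t" "0 < f k" using elim t(1) by linarith+
    ultimately show ?case by (simp add: field_simps)
  qed
  moreover have "0 \<le> t / (f k - t)" "0 \<le> (1 + \<delta>) * (t / f k)" if "X \<le> k" for k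
    using t(1) t(2)[OF that] \<delta> by auto
  ultimately show ?thesis
    using eventually_le_imp_sum_le_plus_const[of X "\<lambda>k. t / (f k - t)" "\<lambda>k. (1 + \<delta>) * (t / f k)"]
    by (simp add: sum_distrib_left)
qed

lemma sum_ln_one_plus_ge_minus_const:
  fixes f :: "nat \<Rightarrow> real"
  assumes f: "filterlim f at_top sequentially" and pos: "\<And>k. X \<le> k \<Longrightarrow> 0 < f k"
    and c: "0 \<le> c" and \<delta>: "0 < \<delta>" "\<delta> \<le> 1"
  shows "\<exists>C. \<forall>x. (1 - \<delta>) * (\<Sum>k\<in>{X..x}. c / f k) \<le> C + (\<Sum>k\<in>{X..x}. ln (1 + c / f k))"
proof -
  have "eventually (\<lambda>k. c / \<delta> + 1 \<le> f k) sequentially"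
    using f unfolding filterlim_at_top by blast
  then have "eventually (\<lambda>k. (1 - \<delta>) * (c / f k) \<le> ln (1 + c / f k)) sequentially"
  proof eventually_elim
    case (elim k)
    define y where "y = c / f k"
    have "0 \<le> c / \<delta>" using c \<delta> by simp
    then have "0 < f k" using elim by linarith
    then have y: "0 \<le> y" "y \<le> \<delta>"
      using elim c \<delta> by (auto simp: y_def field_simps)
    then have "(1 - \<delta>) * y \<le> y - y\<^sup>2" by (simp add: power2_eq_square algebra_simps mult_right_mono)
    also have "\<dots> \<le> ln (1 + y)" using y \<delta> by (intro ln_one_plus_pos_lower_bound) auto
    finally show ?case unfolding y_def .
  qed
  moreover have "0 \<le> (1 - \<delta>) * (c / f k)" "0 \<le> ln (1 + c / f k)" if "X \<le> k" for k
    using pos[OF that] c \<delta> by auto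
  ultimately show ?thesis
    using eventually_le_imp_sum_le_plus_const[of X "\<lambda>k. (1 - \<delta>) * (c / f k)" "\<lambda>k. ln (1 + c / f k)"]
    by (simp add: sum_distrib_left)
qed

lemma prod_div_diff_le_exp_sum:
  fixes f :: "nat \<Rightarrow> real"
  assumes "0 \<le> t" "\<And>k. k \<in> S \<Longrightarrow> t < f k"
  shows "(\<Prod>k\<in>S. f k / (f k - t)) \<le> exp (\<Sum>k\<in>S. t / (f k - t))"
proof -
  have "f k / (f k - t) = 1 + t / (f k - t)" if "k \<in> S" for k
  proof -
    have "f k - t \<noteq> 0" using assms(2)[OF that] by simp
    then show ?thesis by (simp add: field_simps)
  qed
  then have "(\<Prod>k\<in>S. f k / (f k - t)) = (\<Prod>k\<in>S. 1 + t / (f k - t))"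
    by (intro prod.cong) auto
  also have "\<dots> \<le> exp (\<Sum>k\<in>S. t / (f k - t))"
    using assms by (intro prod_le_exp_sum divide_nonneg_pos) auto
  finally show ?thesis .
qed

lemma sum_atLeastAtMost_le_suminf:
  fixes h :: "nat \<Rightarrow> real"
  assumes "\<And>k. 1 \<le> k \<Longrightarrow> 0 \<le> h k" "summable (\<lambda>k. h (Suc k))" "1 \<le> X"
  shows "(\<Sum>k\<in>{X..N}. h k) \<le> (\<Sum>k. h (Suc k))"
proof -
  have "(\<Sum>k\<in>{X..N}. h k) \<le> (\<Sum>k\<in>{1..N}. h k)"
    using assms(1,3) by (intro sum_mono2) auto
  also have "\<dots> = (\<Sum>k<N. h (Suc k))" by (simp add: sum.atLeast1_atMost_eq)
  also have "\<dots> \<le> (\<Sum>k. h (Suc k))" using assms(1,2) by (intro sum_le_suminf) auto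
  finally show ?thesis .
qed

lemma prod_div_diff_le_exp_suminf:
  fixes f :: "nat \<Rightarrow> real"
  assumes pos: "\<And>k. 1 \<le> k \<Longrightarrow> 0 < f k" and summable: "summable (\<lambda>k. 1 / f (Suc k))"
    and X: "1 \<le> X" and mono: "\<And>k. X \<le> k \<Longrightarrow> f X \<le> f k" and \<delta>: "0 < \<delta>" "\<delta> < 1"
  shows "(\<Prod>k\<in>{X..N}. f k / (f k - (1 - \<delta>) * f X)) \<le> exp ((1 - \<delta>) * f X / \<delta> * (\<Sum>k. 1 / f (Suc k)))"
proof -
  define t where "t = (1 - \<delta>) * f X"
  have t: "0 \<le> t" using pos[OF X] \<delta> by (simp add: t_def)
  have gap: "\<delta> * f k \<le> f k - t" if "X \<le> k" for k
  proof -
    have "(1 - \<delta>) * f X \<le> (1 - \<delta>) * f k" using mono[OF that] \<delta> by (intro mult_left_mono) auto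
    then show ?thesis by (simp add: t_def algebra_simps)
  qed
  have fk: "0 < f k" if "X \<le> k" for k using pos X that by simp
  have tf: "t < f k" if "X \<le> k" for k
  proof -
    have "0 < \<delta> * f k" using fk[OF that] \<delta> by simp
    then show ?thesis using gap[OF that] by linarith
  qed
  have partial: "(\<Sum>k\<in>{X..N}. 1 / f k) \<le> (\<Sum>k. 1 / f (Suc k))"
    using pos X summable by (intro sum_atLeastAtMost_le_suminf) (auto intro: less_imp_le)
  have "(\<Sum>k\<in>{X..N}. t / (f k - t)) \<le> (\<Sum>k\<in>{X..N}. t / \<delta> * (1 / f k))"
  proof (rule sum_mono)
    fix k assume "k \<in> {X..N}"
    then have "X \<le> k" by simp
    then have "t / (f k - t) \<le> t / (\<delta> * f k)"
      using gap[of k] fk[of k] tf[of k] t \<delta> by (intro divide_left_mono) auto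
    then show "t / (f k - t) \<le> t / \<delta> * (1 / f k)" by simp
  qed
  also have "\<dots> = t / \<delta> * (\<Sum>k\<in>{X..N}. 1 / f k)" by (simp add: sum_distrib_left)
  also have "\<dots> \<le> t / \<delta> * (\<Sum>k. 1 / f (Suc k))"
    using partial t \<delta> by (intro mult_left_mono) auto
  finally have "(\<Sum>k\<in>{X..N}. t / (f k - t)) \<le> t / \<delta> * (\<Sum>k. 1 / f (Suc k))" .
  then have "(\<Prod>k\<in>{X..N}. f k / (f k - t)) \<le> exp (t / \<delta> * (\<Sum>k. 1 / f (Suc k)))"
    using t tf by (intro order.trans[OF prod_div_diff_le_exp_sum]) auto
  then show ?thesis unfolding t_def .
qed

lemma div_add_eq_inverse_one_plus_div:
  fixes f t :: real
  assumes "0 < f" "0 \<le> t"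
  shows "f / (f + t) = inverse (1 + t / f)"
proof -
  have "f \<noteq> 0" "f + t \<noteq> 0" using assms by auto
  then show ?thesis by (simp add: field_simps)
qed

lemma prod_div_add_le_inverse_sum:
  fixes f :: "nat \<Rightarrow> real"
  assumes pos: "\<And>k. k \<in> S \<Longrightarrow> 0 < f k" and t: "0 \<le> t" and sum_pos: "0 < (\<Sum>k\<in>S. t / f k)"
  shows "(\<Prod>k\<in>S. f k / (f k + t)) \<le> 1 / (\<Sum>k\<in>S. t / f k)"
proof -
  have "(\<Prod>k\<in>S. f k / (f k + t)) = inverse (\<Prod>k\<in>S. 1 + t / f k)"
    using pos t by (simp add: div_add_eq_inverse_one_plus_div prod_inversef[symmetric] cong: prod.cong)
  also have "\<dots> \<le> inverse (\<Sum>k\<in>S. t / f k)"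
    using sum_pos pos t by (intro le_imp_inverse_le sum_le_prod) (auto intro: divide_nonneg_pos)
  finally show ?thesis by (simp add: inverse_eq_divide)
qed

lemma neg_ln_prod_div_add:
  fixes f :: "nat \<Rightarrow> real"
  assumes "finite S" "\<And>k. k \<in> S \<Longrightarrow> 0 < f k" "0 \<le> t"
  shows "- ln (\<Prod>k\<in>S. f k / (f k + t)) = (\<Sum>k\<in>S. ln (1 + t / f k))"
proof -
  have pos: "0 < 1 + t / f k" if "k \<in> S" for k
    using assms(2)[OF that] assms(3) by (simp add: add_pos_nonneg)
  have "(\<Prod>k\<in>S. f k / (f k + t)) = (\<Prod>k\<in>S. inverse (1 + t / f k))"
    using assms(2,3) by (intro prod.cong) (auto simp: div_add_eq_inverse_one_plus_div)
  also have "ln \<dots> = (\<Sum>k\<in>S. ln (inverse (1 + t / f k)))"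
    using pos by (intro ln_prod[OF assms(1)]) (metis inverse_nonzero_iff_nonzero less_irrefl)
  finally show ?thesis by (simp add: ln_inverse sum_negf)
qed

lemma prod_Sigma_Un_row:
  assumes "finite S" "\<And>i. i \<in> S \<Longrightarrow> finite (B i)" "finite T" "i0 \<notin> S"
  shows "(\<Prod>j\<in>Sigma S B \<union> {i0} \<times> T. f (fst j) (snd j)) = (\<Prod>i\<in>S. \<Prod>k\<in>B i. f i k) * (\<Prod>k\<in>T. f i0 k)"
proof -
  have "(\<Prod>j\<in>Sigma S B \<union> {i0} \<times> T. f (fst j) (snd j)) =
        (\<Prod>j\<in>Sigma S B. f (fst j) (snd j)) * (\<Prod>j\<in>{i0} \<times> T. f (fst j) (snd j))"
    using assms by (intro prod.union_disjoint) auto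
  also have "(\<Prod>j\<in>Sigma S B. f (fst j) (snd j)) = (\<Prod>i\<in>S. \<Prod>k\<in>B i. f i k)"
    using assms(1,2) by (subst prod.Sigma) (auto simp: case_prod_beta)
  also have "(\<Prod>j\<in>{i0} \<times> T. f (fst j) (snd j)) = (\<Prod>k\<in>T. f i0 k)"
  proof -
    have "{i0} \<times> T = Pair i0 ` T" by auto
    then show ?thesis by (simp add: prod.reindex inj_on_def)
  qed
  finally show ?thesis .
qed

lemma ex_pos_less_if_filterlim_at_top:
  fixes f :: "nat \<Rightarrow> real"
  assumes "filterlim f at_top sequentially" and pos: "\<And>k. X \<le> k \<Longrightarrow> 0 < f k"
  shows "\<exists>\<theta>>0. \<forall>k\<ge>X. \<theta> < f k"
proof -
  obtain k1 where k1: "\<And>k. k1 \<le> k \<Longrightarrow> 1 \<le> f k"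
    using assms(1) unfolding filterlim_at_top eventually_sequentially by blast
  define m where "m = Min (insert 1 (f ` {X..k1}))"
  have "0 < m" unfolding m_def using pos by (subst Min_gr_iff) auto
  moreover have "m \<le> f k" if "X \<le> k" for k
  proof (cases "k \<le> k1")
    case True
    then show ?thesis unfolding m_def using that by (intro Min_le) auto
  next
    case False
    then have "m \<le> 1" "1 \<le> f k" unfolding m_def using k1 by (auto intro: Min_le)
    then show ?thesis by linarith
  qed
  ultimately show ?thesis by (intro exI[of _ "m / 2"]) force
qed

section \<open>Pathwise analysis of the exponential embedding\<close>

definition exit_time :: "(nat \<Rightarrow> nat \<Rightarrow> 'a \<Rightarrow> real) \<Rightarrow> (nat \<Rightarrow> nat) \<Rightarrow> nat \<Rightarrow> nat \<Rightarrow> 'a \<Rightarrow> real" where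
  "exit_time tau X0 i k \<omega> = (\<Sum>l\<in>{X0 i..k}. tau i l \<omega>)"

definition next_exit :: "(nat \<Rightarrow> nat \<Rightarrow> 'a \<Rightarrow> real) \<Rightarrow> (nat \<Rightarrow> nat) \<Rightarrow> nat \<Rightarrow> real \<Rightarrow> 'a \<Rightarrow> real" where
  "next_exit tau X0 i t \<omega> = exit_time tau X0 i (LEAST k. t < exit_time tau X0 i k \<omega>) \<omega>"

lemma birth_proc_eq:
  "birth_proc tau X0 i t \<omega> =
     (if \<exists>k. t < exit_time tau X0 i k \<omega> then enat (LEAST k. t < exit_time tau X0 i k \<omega>) else \<infinity>)"
  unfolding birth_proc_def exit_time_def ..

lemma enat_less_birth_proc_iff:
  "enat x < birth_proc tau X0 i t \<omega> \<longleftrightarrow> (\<forall>k\<le>x. exit_time tau X0 i k \<omega> \<le> t)"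
proof (cases "\<exists>k. t < exit_time tau X0 i k \<omega>")
  case True
  let ?P = "\<lambda>k. t < exit_time tau X0 i k \<omega>"
  have "x < (LEAST k. ?P k) \<longleftrightarrow> (\<forall>k\<le>x. \<not> ?P k)"
    using LeastI_ex[OF True] by (metis le_less_trans not_less not_less_Least)
  then show ?thesis using True by (simp add: birth_proc_eq not_less)
next
  case False
  then have "birth_proc tau X0 i t \<omega> = \<infinity>" by (simp add: birth_proc_eq)
  with False show ?thesis by (simp add: not_less)
qed

lemma next_exit_gt: "\<exists>k. t < exit_time tau X0 i k \<omega> \<Longrightarrow> t < next_exit tau X0 i t \<omega>"
  unfolding next_exit_def by (rule LeastI_ex)

lemma birth_proc_changes_iff:
  assumes "t < exit_time tau X0 i k \<omega>" and "t < s"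
  shows "birth_proc tau X0 i s \<omega> \<noteq> birth_proc tau X0 i t \<omega> \<longleftrightarrow> next_exit tau X0 i t \<omega> \<le> s"
proof -
  let ?e = "\<lambda>k. exit_time tau X0 i k \<omega>"
  define L where "L = (LEAST k. t < ?e k)"
  have below: "?e k \<le> s" if "k < L" for k
    using not_less_Least[of k "\<lambda>k. t < ?e k"] that assms(2) unfolding L_def by force
  have bt: "birth_proc tau X0 i t \<omega> = enat L"
    using assms(1) unfolding birth_proc_eq L_def by auto
  show ?thesis
  proof (cases "\<exists>k. s < ?e k")
    case True
    have "(LEAST k. s < ?e k) = L \<longleftrightarrow> s < ?e L"
      using LeastI_ex[OF True] below by (metis Least_equality not_less not_less_Least)
    then show ?thesis using True bt unfolding birth_proc_eq next_exit_def L_def[symmetric] by auto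
  next
    case False
    then have "birth_proc tau X0 i s \<omega> = \<infinity>" "?e L \<le> s" by (simp_all add: birth_proc_eq not_less)
    then show ?thesis using bt unfolding next_exit_def L_def[symmetric] by simp
  qed
qed

lemma birth_proc_constant_after_explosion:
  assumes "\<forall>k. exit_time tau X0 i k \<omega> \<le> t" and "t < s"
  shows "birth_proc tau X0 i s \<omega> = birth_proc tau X0 i t \<omega>"
proof -
  have "\<not> (\<exists>k. t < exit_time tau X0 i k \<omega>)" "\<not> (\<exists>k. s < exit_time tau X0 i k \<omega>)"
    using assms by (auto simp: not_less intro: order.trans)
  then show ?thesis unfolding birth_proc_eq by simp
qed

lemma jump_time_Suc_eq_Min:
  fixes tau :: "nat \<Rightarrow> nat \<Rightarrow> 'a \<Rightarrow> real" and X0 A n and \<omega> :: 'a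
  defines "t \<equiv> jump_time tau X0 A n \<omega>"
  defines "G \<equiv> {i\<in>{1..A}. \<exists>k. t < exit_time tau X0 i k \<omega>}"
  shows "jump_time tau X0 A (Suc n) \<omega> =
           (if G = {} then Inf {} else Min ((\<lambda>i. next_exit tau X0 i t \<omega>) ` G))"
proof -
  let ?S = "{s. t < s \<and> (\<exists>i\<in>{1..A}. birth_proc tau X0 i s \<omega> \<noteq> birth_proc tau X0 i t \<omega>)}"
  have S: "?S = {s. \<exists>i\<in>G. next_exit tau X0 i t \<omega> \<le> s}"
  proof (intro set_eqI iffI)
    fix s assume "s \<in> ?S"
    then obtain i where i: "i \<in> {1..A}" "t < s" "birth_proc tau X0 i s \<omega> \<noteq> birth_proc tau X0 i t \<omega>"
      by auto
    then obtain k where k: "t < exit_time tau X0 i k \<omega>"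
      using birth_proc_constant_after_explosion by (metis not_less)
    then show "s \<in> {s. \<exists>i\<in>G. next_exit tau X0 i t \<omega> \<le> s}"
      using i birth_proc_changes_iff[OF k i(2)] unfolding G_def by auto
  next
    fix s assume "s \<in> {s. \<exists>i\<in>G. next_exit tau X0 i t \<omega> \<le> s}"
    then obtain i k where i: "i \<in> {1..A}" "next_exit tau X0 i t \<omega> \<le> s"
      and k: "t < exit_time tau X0 i k \<omega>" unfolding G_def by auto
    have "t < s" using next_exit_gt[of t tau X0 i \<omega>] k i(2) by force
    then show "s \<in> ?S" using i birth_proc_changes_iff[OF k \<open>t < s\<close>] by auto
  qed
  have "Inf {s. \<exists>i\<in>G. next_exit tau X0 i t \<omega> \<le> s} = Min ((\<lambda>i. next_exit tau X0 i t \<omega>) ` G)"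
    if "G \<noteq> {}"
  proof (rule cInf_eq_minimum)
    have "finite G" unfolding G_def by auto
    then show "Min ((\<lambda>i. next_exit tau X0 i t \<omega>) ` G) \<in> {s. \<exists>i\<in>G. next_exit tau X0 i t \<omega> \<le> s}"
      using Min_in[of "(\<lambda>i. next_exit tau X0 i t \<omega>) ` G"] that by fastforce
    show "Min ((\<lambda>i. next_exit tau X0 i t \<omega>) ` G) \<le> s" if "s \<in> {s. \<exists>i\<in>G. next_exit tau X0 i t \<omega> \<le> s}" for s
      using that \<open>finite G\<close> by (auto intro: order.trans[OF Min_le])
  qed
  then show ?thesis using S by (auto simp: t_def)
qed

lemma jump_time_Suc_le_iff:
  fixes tau :: "nat \<Rightarrow> nat \<Rightarrow> 'a \<Rightarrow> real" and X0 A n and \<omega> :: 'a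
  defines "t \<equiv> jump_time tau X0 A n \<omega>"
  shows "jump_time tau X0 A (Suc n) \<omega> \<le> c \<longleftrightarrow>
           ((\<forall>i\<in>{1..A}. \<forall>k. exit_time tau X0 i k \<omega> \<le> t) \<and> Inf {} \<le> c) \<or>
           (\<exists>i\<in>{1..A}. (\<exists>k. t < exit_time tau X0 i k \<omega>) \<and> next_exit tau X0 i t \<omega> \<le> c)"
proof -
  let ?G = "{i\<in>{1..A}. \<exists>k. t < exit_time tau X0 i k \<omega>}"
  note eq = jump_time_Suc_eq_Min[of tau X0 A n \<omega>, folded t_def]
  show ?thesis
  proof (cases "?G = {}")
    case True
    then have "\<forall>i\<in>{1..A}. \<forall>k. exit_time tau X0 i k \<omega> \<le> t" by (auto simp: not_less)
    with True show ?thesis unfolding eq by auto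
  next
    case False
    have "finite ?G" by auto
    then have "Min ((\<lambda>i. next_exit tau X0 i t \<omega>) ` ?G) \<le> c \<longleftrightarrow> (\<exists>i\<in>?G. next_exit tau X0 i t \<omega> \<le> c)"
      using False by (subst Min_le_iff) auto
    moreover have "\<not> (\<forall>i\<in>{1..A}. \<forall>k. exit_time tau X0 i k \<omega> \<le> t)" using False by (auto simp: not_less)
    ultimately show ?thesis using False unfolding eq by (simp only: if_False) blast
  qed
qed

lemma X0_le_if_exit_time_pos: "0 < exit_time tau X0 i k \<omega> \<Longrightarrow> X0 i \<le> k"
  unfolding exit_time_def by (cases "X0 i \<le> k") auto

definition positive_sojourns :: "(nat \<Rightarrow> nat \<Rightarrow> 'a \<Rightarrow> real) \<Rightarrow> (nat \<Rightarrow> nat) \<Rightarrow> nat \<Rightarrow> 'a \<Rightarrow> bool" where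
  "positive_sojourns tau X0 A \<omega> \<longleftrightarrow> (\<forall>i\<in>{1..A}. \<forall>k\<ge>X0 i. 0 < tau i k \<omega>)"

context
  fixes tau :: "nat \<Rightarrow> nat \<Rightarrow> 'a \<Rightarrow> real" and X0 :: "nat \<Rightarrow> nat" and A :: nat and \<omega> :: 'a
  assumes pos: "positive_sojourns tau X0 A \<omega>"
begin

lemma exit_time_mono:
  assumes "i \<in> {1..A}" "k \<le> k'"
  shows "exit_time tau X0 i k \<omega> \<le> exit_time tau X0 i k' \<omega>"
  unfolding exit_time_def using assms pos unfolding positive_sojourns_def
  by (intro sum_mono2) (auto intro: less_imp_le)

lemma exit_time_strict_mono:
  assumes "i \<in> {1..A}" "k < k'" "X0 i \<le> k'"
  shows "exit_time tau X0 i k \<omega> < exit_time tau X0 i k' \<omega>"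
proof -
  obtain m where m: "k' = Suc m" using assms(2) less_imp_Suc_add by blast
  have "exit_time tau X0 i k' \<omega> = exit_time tau X0 i (k' - 1) \<omega> + tau i k' \<omega>"
    using assms(3) unfolding exit_time_def m by (simp add: sum.cl_ivl_Suc)
  moreover have "0 < tau i k' \<omega>" using assms pos unfolding positive_sojourns_def by auto
  moreover have "exit_time tau X0 i k \<omega> \<le> exit_time tau X0 i (k' - 1) \<omega>"
    using assms(2) by (intro exit_time_mono[OF assms(1)]) simp
  ultimately show ?thesis by linarith
qed

lemma first_sojourn_le_exit_time:
  assumes "i \<in> {1..A}" "X0 i \<le> k"
  shows "tau i (X0 i) \<omega> \<le> exit_time tau X0 i k \<omega>"
  using exit_time_mono[OF assms] by (simp add: exit_time_def)

lemma jump_time_Suc_if_unexploded: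
  assumes "A \<ge> 1" and "\<forall>i\<in>{1..A}. \<exists>k. jump_time tau X0 A n \<omega> < exit_time tau X0 i k \<omega>"
  shows "jump_time tau X0 A n \<omega> < jump_time tau X0 A (Suc n) \<omega>"
    and "\<forall>i\<in>{1..A}. jump_time tau X0 A (Suc n) \<omega> \<le> next_exit tau X0 i (jump_time tau X0 A n \<omega>) \<omega>"
    and "\<exists>i\<in>{1..A}. jump_time tau X0 A (Suc n) \<omega> = next_exit tau X0 i (jump_time tau X0 A n \<omega>) \<omega>"
proof -
  let ?t = "jump_time tau X0 A n \<omega>"
  let ?N = "(\<lambda>i. next_exit tau X0 i ?t \<omega>) ` {1..A}"
  have "{i\<in>{1..A}. \<exists>k. ?t < exit_time tau X0 i k \<omega>} = {1..A}" "{1..A} \<noteq> {}" using assms by auto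
  then have eq: "jump_time tau X0 A (Suc n) \<omega> = Min ?N"
    using jump_time_Suc_eq_Min[of tau X0 A n \<omega>] by (simp del: jump_time.simps)
  have "Min ?N \<in> ?N" using \<open>{1..A} \<noteq> {}\<close> by (intro Min_in) auto
  moreover have "\<forall>i\<in>{1..A}. ?t < next_exit tau X0 i ?t \<omega>" using assms(2) by (auto intro: next_exit_gt)
  ultimately show "?t < jump_time tau X0 A (Suc n) \<omega>"
    and "\<exists>i\<in>{1..A}. jump_time tau X0 A (Suc n) \<omega> = next_exit tau X0 i ?t \<omega>"
    unfolding eq by auto
  show "\<forall>i\<in>{1..A}. jump_time tau X0 A (Suc n) \<omega> \<le> next_exit tau X0 i ?t \<omega>"
    unfolding eq by auto
qed

lemma jump_time_unexploded:
  assumes "A \<ge> 1"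
  shows "0 \<le> jump_time tau X0 A n \<omega> \<and> (\<forall>i\<in>{1..A}. \<exists>k. jump_time tau X0 A n \<omega> < exit_time tau X0 i k \<omega>)"
proof (induction n)
  case 0
  have "\<exists>k. 0 < exit_time tau X0 i k \<omega>" if "i \<in> {1..A}" for i
    using pos that unfolding positive_sojourns_def exit_time_def by (auto intro!: exI[of _ "X0 i"])
  then show ?case by simp
next
  case (Suc n)
  let ?t = "jump_time tau X0 A n \<omega>"
  note step = jump_time_Suc_if_unexploded[OF assms conjunct2[OF Suc.IH]]
  have "\<exists>k. jump_time tau X0 A (Suc n) \<omega> < exit_time tau X0 i k \<omega>" if i: "i \<in> {1..A}" for i
  proof -
    define L where "L = (LEAST k. ?t < exit_time tau X0 i k \<omega>)"
    have L_exit: "next_exit tau X0 i ?t \<omega> = exit_time tau X0 i L \<omega>"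
      unfolding next_exit_def L_def ..
    have "0 < exit_time tau X0 i L \<omega>"
      using next_exit_gt[of ?t tau X0 i \<omega>] Suc.IH i unfolding L_exit by force
    then have "X0 i \<le> L" by (rule X0_le_if_exit_time_pos)
    then have "exit_time tau X0 i L \<omega> < exit_time tau X0 i (Suc L) \<omega>"
      using i by (intro exit_time_strict_mono) auto
    moreover have "jump_time tau X0 A (Suc n) \<omega> \<le> next_exit tau X0 i ?t \<omega>"
      using step(2) i by blast
    ultimately show ?thesis unfolding L_exit by (intro exI[of _ "Suc L"]) simp
  qed
  then show ?case using step(1) Suc.IH by force
qed

lemma jump_time_less_Suc: "A \<ge> 1 \<Longrightarrow> jump_time tau X0 A n \<omega> < jump_time tau X0 A (Suc n) \<omega>"
  using jump_time_Suc_if_unexploded(1) jump_time_unexploded by blast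

lemma jump_time_Suc_is_exit_time:
  assumes "A \<ge> 1"
  shows "\<exists>i\<in>{1..A}. \<exists>L\<ge>X0 i. jump_time tau X0 A (Suc n) \<omega> = exit_time tau X0 i L \<omega>"
proof -
  let ?t = "jump_time tau X0 A n \<omega>"
  obtain i where i: "i \<in> {1..A}" and eq: "jump_time tau X0 A (Suc n) \<omega> = next_exit tau X0 i ?t \<omega>"
    using jump_time_Suc_if_unexploded(3) jump_time_unexploded[OF assms] assms by blast
  have "0 < next_exit tau X0 i ?t \<omega>"
    using jump_time_less_Suc[OF assms, of n] jump_time_unexploded[OF assms, of n] eq by simp
  then have "X0 i \<le> (LEAST k. ?t < exit_time tau X0 i k \<omega>)"
    unfolding next_exit_def by (rule X0_le_if_exit_time_pos)
  then show ?thesis using i eq unfolding next_exit_def by blast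
qed

end

lemma prod_exp_tau_eq_exp_exit_time_diff:
  assumes "finite Ms" "1 \<notin> Ms"
  shows "(\<Prod>j\<in>Sigma Ms (\<lambda>i. {X0 i..N}) \<union> {1} \<times> {X0 1..x}.
            exp ((if fst j = 1 then - (\<Sum>i\<in>Ms. \<theta> i) else \<theta> (fst j)) * tau (fst j) (snd j) \<omega>)) =
         exp (\<Sum>i\<in>Ms. \<theta> i * (exit_time tau X0 i N \<omega> - exit_time tau X0 1 x \<omega>))"
proof -
  have "(\<Prod>j\<in>Sigma Ms (\<lambda>i. {X0 i..N}) \<union> {1} \<times> {X0 1..x}.
            exp ((if fst j = 1 then - (\<Sum>i\<in>Ms. \<theta> i) else \<theta> (fst j)) * tau (fst j) (snd j) \<omega>)) =
        (\<Prod>i\<in>Ms. \<Prod>k\<in>{X0 i..N}. exp (\<theta> i * tau i k \<omega>)) *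
        (\<Prod>k\<in>{X0 1..x}. exp (- (\<Sum>i\<in>Ms. \<theta> i) * tau 1 k \<omega>))"
    using assms by (subst prod_Sigma_Un_row) (auto intro!: prod.cong)
  also have "\<dots> = exp (\<Sum>i\<in>Ms. \<theta> i * exit_time tau X0 i N \<omega>) *
                  exp (- (\<Sum>i\<in>Ms. \<theta> i) * exit_time tau X0 1 x \<omega>)"
    unfolding exit_time_def using assms(1) by (simp add: exp_sum sum_distrib_left)
  also have "\<dots> = exp (\<Sum>i\<in>Ms. \<theta> i * (exit_time tau X0 i N \<omega> - exit_time tau X0 1 x \<omega>))"
    by (simp add: exp_add[symmetric] sum_distrib_right right_diff_distrib sum_subtractf)
  finally show ?thesis .
qed

lemma enat_less_urn_limit_iff:
  "enat x < urn_limit tau X0 A i \<omega> \<longleftrightarrow> (\<exists>n. \<forall>k\<le>x. exit_time tau X0 i k \<omega> \<le> jump_time tau X0 A n \<omega>)"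
  unfolding urn_limit_def urn_def by (simp add: less_SUP_iff enat_less_birth_proc_iff)

context
  fixes tau :: "nat \<Rightarrow> nat \<Rightarrow> 'a \<Rightarrow> real" and X0 :: "nat \<Rightarrow> nat" and A :: nat and \<omega> :: 'a
  assumes pos: "positive_sojourns tau X0 A \<omega>" and A: "A \<ge> 1"
begin

lemma enat_less_urn_limit_imp_unexploded:
  assumes "enat x < urn_limit tau X0 A 1 \<omega>" and "i \<in> {1..A}"
  shows "\<exists>k. exit_time tau X0 1 x \<omega> < exit_time tau X0 i k \<omega>"
proof -
  obtain n where "\<forall>k\<le>x. exit_time tau X0 1 k \<omega> \<le> jump_time tau X0 A n \<omega>"
    using assms(1) unfolding enat_less_urn_limit_iff ..
  moreover obtain k where "jump_time tau X0 A n \<omega> < exit_time tau X0 i k \<omega>"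
    using jump_time_unexploded[OF pos A] assms(2) by blast
  ultimately have "exit_time tau X0 1 x \<omega> < exit_time tau X0 i k \<omega>" by fastforce
  then show ?thesis ..
qed

context
  fixes Ms :: "nat set" and a :: real and x K :: nat
  assumes first_sojourns_gt: "\<forall>i\<in>Ms. a < tau i (X0 i) \<omega>"
    and exit_time_one_less: "exit_time tau X0 1 x \<omega> < a"
    and exit_time_others_gt: "\<forall>j\<in>{1..A} - Ms - {1}. a < exit_time tau X0 j K \<omega>"
begin

lemma jump_time_Suc_mem_exit_times:
  assumes "jump_time tau X0 A (Suc n) \<omega> < exit_time tau X0 1 x \<omega>"
  shows "jump_time tau X0 A (Suc n) \<omega> \<in> (\<lambda>(i, k). exit_time tau X0 i k \<omega>) ` ({1..A} \<times> {..max x K})"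
proof -
  obtain i L where i: "i \<in> {1..A}" and L: "X0 i \<le> L"
    and eq: "jump_time tau X0 A (Suc n) \<omega> = exit_time tau X0 i L \<omega>"
    using jump_time_Suc_is_exit_time[OF pos A] by blast
  have small: "exit_time tau X0 i L \<omega> < exit_time tau X0 1 x \<omega>" using assms unfolding eq .
  have "i \<notin> Ms"
  proof
    assume "i \<in> Ms"
    then have "a < tau i (X0 i) \<omega>" using first_sojourns_gt by blast
    then show False using first_sojourn_le_exit_time[OF pos i L] small exit_time_one_less by linarith
  qed
  have Lx: "L < x" if "i = 1"
  proof (rule ccontr)
    assume "\<not> L < x"
    then have "exit_time tau X0 1 x \<omega> \<le> exit_time tau X0 i L \<omega>"
      using exit_time_mono[OF pos i] that by simp
    then show False using small by simp
  qed
  have LK: "L < K" if "i \<noteq> 1"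
  proof (rule ccontr)
    assume "\<not> L < K"
    then have "exit_time tau X0 i K \<omega> \<le> exit_time tau X0 i L \<omega>"
      using exit_time_mono[OF pos i] by simp
    moreover have "a < exit_time tau X0 i K \<omega>" using exit_time_others_gt i that \<open>i \<notin> Ms\<close> by blast
    ultimately show False using small exit_time_one_less by linarith
  qed
  have "L \<le> max x K" using Lx LK by (cases "i = 1") auto
  then show ?thesis unfolding eq using i by (intro image_eqI[of _ _ "(i, L)"]) auto
qed

text \<open>If agent 1 never left level x, all jump times would lie below its exit time from level x,
  hence in a finite set of exit times; but they increase strictly.\<close>

lemma enat_less_urn_limit_if_rivals_slow: "enat x < urn_limit tau X0 A 1 \<omega>"
proof -
  let ?t = "\<lambda>n. jump_time tau X0 A (Suc n) \<omega>"
  have "\<exists>n. exit_time tau X0 1 x \<omega> \<le> ?t n"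
  proof (rule ccontr)
    assume "\<not> ?thesis"
    then have "range ?t \<subseteq> (\<lambda>(i, k). exit_time tau X0 i k \<omega>) ` ({1..A} \<times> {..max x K})"
      using jump_time_Suc_mem_exit_times by (auto simp: not_le)
    moreover have "strict_mono ?t"
      by (rule strict_monoI_Suc) (rule jump_time_less_Suc[OF pos A])
    then have "infinite (range ?t)"
      by (metis finite_imageD infinite_UNIV_nat strict_mono_imp_inj_on)
    ultimately show False using finite_subset by blast
  qed
  then obtain n where "exit_time tau X0 1 x \<omega> \<le> ?t n" ..
  moreover have "exit_time tau X0 1 k \<omega> \<le> exit_time tau X0 1 x \<omega>" if "k \<le> x" for k
    using A that by (intro exit_time_mono[OF pos]) auto
  ultimately have "\<forall>k\<le>x. exit_time tau X0 1 k \<omega> \<le> jump_time tau X0 A (Suc n) \<omega>"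
    by (blast intro: order.trans)
  then show ?thesis unfolding enat_less_urn_limit_iff ..
qed

end

end

section \<open>The probabilistic model\<close>

locale urn_model = prob_space M for M :: "'a measure" +
  fixes tau :: "nat \<Rightarrow> nat \<Rightarrow> 'a \<Rightarrow> real" and F :: "nat \<Rightarrow> nat \<Rightarrow> real"
    and X0 :: "nat \<Rightarrow> nat" and A :: nat
  assumes A_pos: "1 \<le> A"
    and F_pos: "\<And>i k. i \<in> {1..A} \<Longrightarrow> 1 \<le> k \<Longrightarrow> 0 < F i k"
    and X0_pos: "\<And>i. i \<in> {1..A} \<Longrightarrow> 1 \<le> X0 i"
    and indep: "indep_vars (\<lambda>_. borel) (\<lambda>(i, k). tau i k) {(i, k). i \<in> {1..A} \<and> X0 i \<le> k}"
    and expo: "\<And>i k. i \<in> {1..A} \<Longrightarrow> X0 i \<le> k \<Longrightarrow>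
                 distributed M lborel (tau i k) (exponential_density (F i k))"
begin

abbreviation urn_tail :: "nat \<Rightarrow> real" where
  "urn_tail x \<equiv> prob {\<omega> \<in> space M. enat x < urn_limit tau X0 A 1 \<omega>}"

lemma one_mem_agents: "1 \<in> {1..A}"
  using A_pos by simp

lemma F_pos_level: "i \<in> {1..A} \<Longrightarrow> X0 i \<le> k \<Longrightarrow> 0 < F i k"
  using F_pos X0_pos by (meson order.trans)

lemma tau_measurable: "i \<in> {1..A} \<Longrightarrow> X0 i \<le> k \<Longrightarrow> tau i k \<in> borel_measurable M"
  using expo distributed_measurable by (metis measurable_lborel1)

lemma exit_time_measurable: "i \<in> {1..A} \<Longrightarrow> exit_time tau X0 i k \<in> borel_measurable M"
  unfolding exit_time_def by (intro borel_measurable_sum) (auto intro: tau_measurable)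

lemma next_exit_measurable:
  assumes i: "i \<in> {1..A}" and [measurable]: "t \<in> borel_measurable M"
  shows "(\<lambda>\<omega>. next_exit tau X0 i (t \<omega>) \<omega>) \<in> borel_measurable M"
proof -
  note [measurable] = exit_time_measurable[OF i]
  have "(\<lambda>\<omega>. LEAST k. t \<omega> < exit_time tau X0 i k \<omega>) \<in> measurable M (count_space UNIV)"
    by measurable
  then show ?thesis unfolding next_exit_def
    by (rule measurable_compose_countable[OF exit_time_measurable[OF i]])
qed

lemma jump_time_measurable: "jump_time tau X0 A n \<in> borel_measurable M"
proof (induction n)
  case (Suc n)
  let ?t = "jump_time tau X0 A n"
  note [measurable] = Suc.IH
  have "{\<omega> \<in> space M. jump_time tau X0 A (Suc n) \<omega> \<le> c} \<in> sets M" for c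
  proof -
    have exploded: "{\<omega> \<in> space M. \<forall>i\<in>{1..A}. \<forall>k. exit_time tau X0 i k \<omega> \<le> ?t \<omega>} \<in> sets M"
    proof (intro sets.sets_Collect_finite_All)
      fix i assume "i \<in> {1..A}"
      note [measurable] = exit_time_measurable[OF this]
      show "{\<omega> \<in> space M. \<forall>k. exit_time tau X0 i k \<omega> \<le> ?t \<omega>} \<in> sets M" by measurable
    qed auto
    have next_le: "{\<omega> \<in> space M. \<exists>i\<in>{1..A}. (\<exists>k. ?t \<omega> < exit_time tau X0 i k \<omega>) \<and>
                     next_exit tau X0 i (?t \<omega>) \<omega> \<le> c} \<in> sets M"
    proof (intro sets.sets_Collect_finite_Ex)
      fix i assume "i \<in> {1..A}"
      note [measurable] = exit_time_measurable[OF this] next_exit_measurable[OF this Suc.IH]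
      show "{\<omega> \<in> space M. (\<exists>k. ?t \<omega> < exit_time tau X0 i k \<omega>) \<and> next_exit tau X0 i (?t \<omega>) \<omega> \<le> c} \<in> sets M"
        by measurable
    qed auto
    have "{\<omega> \<in> space M. jump_time tau X0 A (Suc n) \<omega> \<le> c} =
          ({\<omega> \<in> space M. \<forall>i\<in>{1..A}. \<forall>k. exit_time tau X0 i k \<omega> \<le> ?t \<omega>} \<inter> {\<omega> \<in> space M. Inf {} \<le> c}) \<union>
          {\<omega> \<in> space M. \<exists>i\<in>{1..A}. (\<exists>k. ?t \<omega> < exit_time tau X0 i k \<omega>) \<and> next_exit tau X0 i (?t \<omega>) \<omega> \<le> c}"
      by (auto simp only: jump_time_Suc_le_iff)
    also have "\<dots> \<in> sets M" using exploded next_le by (intro sets.Un sets.Int) auto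
    finally show ?thesis .
  qed
  then show ?case by (subst borel_measurable_iff_le) blast
qed simp

lemma sets_urn_limit_gt: "{\<omega> \<in> space M. enat x < urn_limit tau X0 A 1 \<omega>} \<in> sets M"
proof -
  note [measurable] = exit_time_measurable[OF one_mem_agents] jump_time_measurable
  have "{\<omega> \<in> space M. enat x < urn_limit tau X0 A 1 \<omega>} =
        {\<omega> \<in> space M. \<exists>n. \<forall>k\<le>x. exit_time tau X0 1 k \<omega> \<le> jump_time tau X0 A n \<omega>}"
    by (simp only: enat_less_urn_limit_iff)
  also have "\<dots> \<in> sets M" by measurable
  finally show ?thesis .
qed

lemma AE_positive_sojourns: "AE \<omega> in M. positive_sojourns tau X0 A \<omega>"
proof -
  have "AE \<omega> in M. 0 < tau i k \<omega>" if i: "i \<in> {1..A}" and k: "X0 i \<le> k" for i k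
  proof -
    have "prob {\<omega>\<in>space M. 0 < tau i k \<omega>} = 1"
      using exponential_distributedD_gt[OF expo[OF i k] _ F_pos_level[OF i k], of 0] by simp
    then show ?thesis by (rule AE_prob_1[THEN AE_mp]) auto
  qed
  then have "AE \<omega> in M. \<forall>i\<in>{1..A}. \<forall>k. X0 i \<le> k \<longrightarrow> 0 < tau i k \<omega>"
    by (intro AE_finite_allI) (auto simp: AE_all_countable)
  then show ?thesis unfolding positive_sojourns_def by simp
qed

lemma
  assumes J: "finite J" "J \<subseteq> {(i, k). i \<in> {1..A} \<and> X0 i \<le> k}"
    and g: "\<And>j. j \<in> J \<Longrightarrow> g j \<in> borel_measurable borel"
    and int: "\<And>j. j \<in> J \<Longrightarrow> integrable M (\<lambda>\<omega>. g j (tau (fst j) (snd j) \<omega>))"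
  shows integrable_prod_tau: "integrable M (\<lambda>\<omega>. \<Prod>j\<in>J. g j (tau (fst j) (snd j) \<omega>) :: real)"
    and integral_prod_tau: "(\<integral>\<omega>. (\<Prod>j\<in>J. g j (tau (fst j) (snd j) \<omega>)) \<partial>M) =
                            (\<Prod>j\<in>J. \<integral>\<omega>. g j (tau (fst j) (snd j) \<omega>) \<partial>M)"
proof -
  have "indep_vars (\<lambda>_. borel) (\<lambda>j \<omega>. g j ((\<lambda>(i, k). tau i k) j \<omega>)) J"
    using g by (intro indep_vars_compose2[OF indep_vars_subset[OF indep J(2)]]) auto
  then have indep': "indep_vars (\<lambda>_. borel) (\<lambda>j \<omega>. g j (tau (fst j) (snd j) \<omega>)) J"
    by (simp add: case_prod_beta)
  show "integrable M (\<lambda>\<omega>. \<Prod>j\<in>J. g j (tau (fst j) (snd j) \<omega>) :: real)"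
    by (rule indep_vars_integrable[OF J(1) indep' int])
  show "(\<integral>\<omega>. (\<Prod>j\<in>J. g j (tau (fst j) (snd j) \<omega>)) \<partial>M) = (\<Prod>j\<in>J. \<integral>\<omega>. g j (tau (fst j) (snd j) \<omega>) \<partial>M)"
    by (rule indep_vars_lebesgue_integral[OF J(1) indep' int])
qed

lemma
  assumes J: "finite J" "J \<subseteq> {(i, k). i \<in> {1..A} \<and> X0 i \<le> k}"
    and c: "\<And>j. j \<in> J \<Longrightarrow> c j < F (fst j) (snd j)"
  shows integrable_prod_exp_tau: "integrable M (\<lambda>\<omega>. \<Prod>j\<in>J. exp (c j * tau (fst j) (snd j) \<omega>))"
    and integral_prod_exp_tau: "(\<integral>\<omega>. (\<Prod>j\<in>J. exp (c j * tau (fst j) (snd j) \<omega>)) \<partial>M) =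
                                (\<Prod>j\<in>J. F (fst j) (snd j) / (F (fst j) (snd j) - c j))"
proof -
  note mgf = exponential_distributed_integral_exp[OF expo F_pos_level]
  have int: "integrable M (\<lambda>\<omega>. (\<lambda>j y. exp (c j * y)) j (tau (fst j) (snd j) \<omega>))" if "j \<in> J" for j
    using J(2) that mgf(1) c[OF that] by auto
  show "integrable M (\<lambda>\<omega>. \<Prod>j\<in>J. exp (c j * tau (fst j) (snd j) \<omega>))"
    using integrable_prod_tau[OF J _ int] by simp
  have "(\<integral>\<omega>. (\<Prod>j\<in>J. exp (c j * tau (fst j) (snd j) \<omega>)) \<partial>M) =
        (\<Prod>j\<in>J. \<integral>\<omega>. exp (c j * tau (fst j) (snd j) \<omega>) \<partial>M)"
    using integral_prod_tau[OF J _ int] by simp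
  also have "\<dots> = (\<Prod>j\<in>J. F (fst j) (snd j) / (F (fst j) (snd j) - c j))"
    using J(2) mgf(2) c by (intro prod.cong) auto
  finally show "(\<integral>\<omega>. (\<Prod>j\<in>J. exp (c j * tau (fst j) (snd j) \<omega>)) \<partial>M) =
                (\<Prod>j\<in>J. F (fst j) (snd j) / (F (fst j) (snd j) - c j))" .
qed

section \<open>Upper bound for the tail of the limit\<close>

definition rivals_below :: "nat set \<Rightarrow> nat \<Rightarrow> nat \<Rightarrow> 'a set" where
  "rivals_below Ms x N =
     {\<omega>\<in>space M. \<forall>i\<in>Ms. \<exists>N'\<le>N. exit_time tau X0 1 x \<omega> < exit_time tau X0 i N' \<omega>}"

lemma sets_rivals_below: "Ms \<subseteq> {1..A} \<Longrightarrow> rivals_below Ms x N \<in> sets M"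
  unfolding rivals_below_def
proof (intro sets.sets_Collect_finite_All)
  fix i assume "Ms \<subseteq> {1..A}" "i \<in> Ms"
  then have "i \<in> {1..A}" by blast
  note [measurable] = exit_time_measurable[OF one_mem_agents] exit_time_measurable[OF this]
  show "{\<omega>\<in>space M. \<exists>N'\<le>N. exit_time tau X0 1 x \<omega> < exit_time tau X0 i N' \<omega>} \<in> sets M"
    by measurable
qed (auto intro: finite_subset)

lemma incseq_rivals_below: "incseq (rivals_below Ms x)"
  unfolding incseq_def rivals_below_def by (auto intro: order.trans)

lemma AE_indicator_rivals_below_le_exp:
  assumes Ms: "Ms \<subseteq> {1..A}" and \<theta>: "\<And>i. i \<in> Ms \<Longrightarrow> 0 \<le> \<theta> i"
  shows "AE \<omega> in M. indicator (rivals_below Ms x N) \<omega> \<le>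
           exp (\<Sum>i\<in>Ms. \<theta> i * (exit_time tau X0 i N \<omega> - exit_time tau X0 1 x \<omega>))"
  using AE_positive_sojourns
proof eventually_elim
  case (elim \<omega>)
  show ?case
  proof (cases "\<omega> \<in> rivals_below Ms x N")
    case True
    have "0 \<le> \<theta> i * (exit_time tau X0 i N \<omega> - exit_time tau X0 1 x \<omega>)" if "i \<in> Ms" for i
    proof -
      have i: "i \<in> {1..A}" using that Ms by blast
      from True that obtain N' where N': "N' \<le> N" "exit_time tau X0 1 x \<omega> < exit_time tau X0 i N' \<omega>"
        unfolding rivals_below_def by blast
      have "exit_time tau X0 i N' \<omega> \<le> exit_time tau X0 i N \<omega>" by (rule exit_time_mono[OF elim i N'(1)])
      with N'(2) have "0 \<le> exit_time tau X0 i N \<omega> - exit_time tau X0 1 x \<omega>" by linarith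
      with \<theta>[OF that] show ?thesis by simp
    qed
    then have "0 \<le> (\<Sum>i\<in>Ms. \<theta> i * (exit_time tau X0 i N \<omega> - exit_time tau X0 1 x \<omega>))"
      by (rule sum_nonneg)
    then show ?thesis using True by simp
  qed simp
qed

text \<open>Chernoff bound: the exponential weight above is a product of independent factors.\<close>

lemma prob_rivals_below_le:
  assumes Ms: "Ms \<subseteq> {1..A}" "1 \<notin> Ms"
    and \<theta>: "\<And>i k. i \<in> Ms \<Longrightarrow> X0 i \<le> k \<Longrightarrow> 0 \<le> \<theta> i \<and> \<theta> i < F i k"
  shows "prob (rivals_below Ms x N) \<le>
           (\<Prod>i\<in>Ms. \<Prod>k\<in>{X0 i..N}. F i k / (F i k - \<theta> i)) *
           (\<Prod>k\<in>{X0 1..x}. F 1 k / (F 1 k + (\<Sum>i\<in>Ms. \<theta> i)))"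
proof -
  define J where "J = Sigma Ms (\<lambda>i. {X0 i..N}) \<union> {1} \<times> {X0 1..x}"
  define c where "c i = (if i = 1 then - (\<Sum>i\<in>Ms. \<theta> i) else \<theta> i)" for i
  have finMs: "finite Ms" using Ms(1) finite_subset by blast
  have J: "finite J" "J \<subseteq> {(i, k). i \<in> {1..A} \<and> X0 i \<le> k}"
    unfolding J_def using finMs Ms(1) one_mem_agents by auto
  have \<theta>0: "0 \<le> \<theta> i" if "i \<in> Ms" for i using \<theta>[OF that order.refl] by simp
  then have "0 \<le> (\<Sum>i\<in>Ms. \<theta> i)" by (auto intro: sum_nonneg)
  then have cF: "c (fst j) < F (fst j) (snd j)" if "j \<in> J" for j
    using that \<theta> Ms(2) F_pos_level[OF one_mem_agents] unfolding J_def c_def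
    by (fastforce simp: add_pos_nonneg)
  note I = integrable_prod_exp_tau[OF J, of "\<lambda>j. c (fst j)", OF cF]
    integral_prod_exp_tau[OF J, of "\<lambda>j. c (fst j)", OF cF]
  have "AE \<omega> in M. indicator (rivals_below Ms x N) \<omega> \<le> (\<Prod>j\<in>J. exp (c (fst j) * tau (fst j) (snd j) \<omega>))"
    using AE_indicator_rivals_below_le_exp[OF Ms(1) \<theta>0]
    unfolding J_def c_def prod_exp_tau_eq_exp_exit_time_diff[OF finMs Ms(2)] .
  moreover have "integrable M (indicator (rivals_below Ms x N) :: 'a \<Rightarrow> real)"
    using sets_rivals_below[OF Ms(1)] by (intro integrable_const_bound[where B=1]) (auto simp: indicator_def)
  ultimately have "(\<integral>\<omega>. indicator (rivals_below Ms x N) \<omega> \<partial>M) \<le>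
                   (\<integral>\<omega>. (\<Prod>j\<in>J. exp (c (fst j) * tau (fst j) (snd j) \<omega>)) \<partial>M)"
    using I(1) by (intro integral_mono_AE)
  also have "\<dots> = (\<Prod>j\<in>J. F (fst j) (snd j) / (F (fst j) (snd j) - c (fst j)))" by (rule I(2))
  also have "\<dots> = (\<Prod>i\<in>Ms. \<Prod>k\<in>{X0 i..N}. F i k / (F i k - \<theta> i)) *
                  (\<Prod>k\<in>{X0 1..x}. F 1 k / (F 1 k + (\<Sum>i\<in>Ms. \<theta> i)))"
    unfolding J_def using finMs Ms(2) by (subst prod_Sigma_Un_row) (auto simp: c_def intro!: prod.cong)
  finally show ?thesis using sets_rivals_below[OF Ms(1)] by simp
qed

lemma urn_tail_le_prob_rivals_below:
  assumes "Ms \<subseteq> {1..A}"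
  shows "urn_tail x \<le> prob (\<Union>N. rivals_below Ms x N)"
proof (rule finite_measure_mono_AE)
  show "(\<Union>N. rivals_below Ms x N) \<in> sets M" using sets_rivals_below[OF assms] by blast
  show "AE \<omega> in M. \<omega> \<in> {\<omega> \<in> space M. enat x < urn_limit tau X0 A 1 \<omega>} \<longrightarrow> \<omega> \<in> (\<Union>N. rivals_below Ms x N)"
    using AE_positive_sojourns
  proof eventually_elim
    case (elim \<omega>)
    show ?case
    proof
      assume "\<omega> \<in> {\<omega> \<in> space M. enat x < urn_limit tau X0 A 1 \<omega>}"
      then have \<omega>: "\<omega> \<in> space M" "enat x < urn_limit tau X0 A 1 \<omega>" by auto
      have "\<forall>i\<in>Ms. \<exists>k. exit_time tau X0 1 x \<omega> < exit_time tau X0 i k \<omega>"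
        using enat_less_urn_limit_imp_unexploded[OF elim A_pos \<omega>(2)] assms by blast
      then obtain N where N: "\<forall>i\<in>Ms. exit_time tau X0 1 x \<omega> < exit_time tau X0 i (N i) \<omega>"
        by (metis bchoice)
      have "finite Ms" using assms finite_subset by blast
      then have "N i \<le> (\<Sum>i\<in>Ms. N i)" if "i \<in> Ms" for i
        using that by (intro member_le_sum) auto
      then have "\<omega> \<in> rivals_below Ms x (\<Sum>i\<in>Ms. N i)"
        using \<omega>(1) N unfolding rivals_below_def by blast
      then show "\<omega> \<in> (\<Union>N. rivals_below Ms x N)" by blast
    qed
  qed
qed

lemma urn_tail_le:
  assumes Ms: "Ms \<subseteq> {1..A}" "1 \<notin> Ms"
    and \<theta>: "\<And>i k. i \<in> Ms \<Longrightarrow> X0 i \<le> k \<Longrightarrow> 0 \<le> \<theta> i \<and> \<theta> i < F i k"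
    and C: "\<And>i N. i \<in> Ms \<Longrightarrow> (\<Prod>k\<in>{X0 i..N}. F i k / (F i k - \<theta> i)) \<le> C i"
  shows "urn_tail x \<le> (\<Prod>i\<in>Ms. C i) * (\<Prod>k\<in>{X0 1..x}. F 1 k / (F 1 k + (\<Sum>i\<in>Ms. \<theta> i)))"
proof -
  have "prob (rivals_below Ms x N) \<le> (\<Prod>i\<in>Ms. C i) * (\<Prod>k\<in>{X0 1..x}. F 1 k / (F 1 k + (\<Sum>i\<in>Ms. \<theta> i)))"
    for N
  proof -
    have "prob (rivals_below Ms x N) \<le> (\<Prod>i\<in>Ms. \<Prod>k\<in>{X0 i..N}. F i k / (F i k - \<theta> i)) *
                                        (\<Prod>k\<in>{X0 1..x}. F 1 k / (F 1 k + (\<Sum>i\<in>Ms. \<theta> i)))"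
      by (rule prob_rivals_below_le[OF Ms \<theta>])
    also have "\<dots> \<le> (\<Prod>i\<in>Ms. C i) * (\<Prod>k\<in>{X0 1..x}. F 1 k / (F 1 k + (\<Sum>i\<in>Ms. \<theta> i)))"
    proof (rule mult_right_mono)
      have "0 \<le> F i k / (F i k - \<theta> i)" if "i \<in> Ms" "X0 i \<le> k" for i k
        using \<theta>[OF that] by simp
      then show "(\<Prod>i\<in>Ms. \<Prod>k\<in>{X0 i..N}. F i k / (F i k - \<theta> i)) \<le> (\<Prod>i\<in>Ms. C i)"
        using C by (intro prod_mono conjI prod_nonneg) auto
      have "0 \<le> (\<Sum>i\<in>Ms. \<theta> i)" using \<theta> by (intro sum_nonneg) blast
      then show "0 \<le> (\<Prod>k\<in>{X0 1..x}. F 1 k / (F 1 k + (\<Sum>i\<in>Ms. \<theta> i)))"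
        using F_pos_level[OF one_mem_agents] by (intro prod_nonneg) (simp add: less_imp_le)
    qed
    finally show ?thesis .
  qed
  moreover have "(\<lambda>N. prob (rivals_below Ms x N)) \<longlonglongrightarrow> prob (\<Union>N. rivals_below Ms x N)"
    using sets_rivals_below[OF Ms(1)] incseq_rivals_below by (intro finite_Lim_measure_incseq) auto
  ultimately have "prob (\<Union>N. rivals_below Ms x N) \<le>
                     (\<Prod>i\<in>Ms. C i) * (\<Prod>k\<in>{X0 1..x}. F 1 k / (F 1 k + (\<Sum>i\<in>Ms. \<theta> i)))"
    by (intro LIMSEQ_le_const2) auto
  then show ?thesis using urn_tail_le_prob_rivals_below[OF Ms(1), of x] by linarith
qed

section \<open>Lower bound for the tail of the limit\<close>

lemma
  assumes Ms: "Ms \<subseteq> {1..A}" and i0: "i0 \<in> {1..A}" "i0 \<notin> Ms" and a: "0 \<le> a"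
    and c: "\<And>k. X0 i0 \<le> k \<Longrightarrow> c < F i0 k"
  shows integrable_first_sojourns_gt_exp_exit_time:
      "integrable M (\<lambda>\<omega>. (\<Prod>i\<in>Ms. indicator {a<..} (tau i (X0 i) \<omega>)) * exp (c * exit_time tau X0 i0 n \<omega>) :: real)"
    and integral_first_sojourns_gt_exp_exit_time:
      "(\<integral>\<omega>. (\<Prod>i\<in>Ms. indicator {a<..} (tau i (X0 i) \<omega>)) * exp (c * exit_time tau X0 i0 n \<omega>) \<partial>M) =
         exp (- a * (\<Sum>i\<in>Ms. F i (X0 i))) * (\<Prod>k\<in>{X0 i0..n}. F i0 k / (F i0 k - c))"
proof -
  have finMs: "finite Ms" using Ms finite_subset by blast
  define J where "J = Sigma Ms (\<lambda>i. {X0 i}) \<union> {i0} \<times> {X0 i0..n}"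
  define g :: "nat \<times> nat \<Rightarrow> real \<Rightarrow> real" where
    "g j = (if fst j \<in> Ms then indicator {a<..} else (\<lambda>y. exp (c * y)))" for j
  have J: "finite J" "J \<subseteq> {(i, k). i \<in> {1..A} \<and> X0 i \<le> k}"
    unfolding J_def using finMs Ms i0 by auto
  have tail: "integrable M (\<lambda>\<omega>. indicator {a<..} (tau i k \<omega>) :: real)"
    "(\<integral>\<omega>. indicator {a<..} (tau i k \<omega>) \<partial>M) = exp (- a * F i k)" if "i \<in> {1..A}" "X0 i \<le> k" for i k
    using exponential_distributed_integral_indicator_gt[OF expo[OF that] F_pos_level[OF that] a] by auto
  note mgf = exponential_distributed_integral_exp[OF expo F_pos_level]
  have g_meas: "g j \<in> borel_measurable borel" for j unfolding g_def by auto
  have g_int: "integrable M (\<lambda>\<omega>. g j (tau (fst j) (snd j) \<omega>))" if "j \<in> J" for j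
    using that Ms i0 tail(1) mgf(1) c unfolding J_def g_def by auto
  have split: "(\<Prod>j\<in>J. h (fst j) (snd j)) = (\<Prod>i\<in>Ms. h i (X0 i)) * (\<Prod>k\<in>{X0 i0..n}. h i0 k)"
    for h :: "nat \<Rightarrow> nat \<Rightarrow> real"
    unfolding J_def using finMs i0(2) by (subst prod_Sigma_Un_row) auto
  have prod_g: "(\<Prod>j\<in>J. g j (tau (fst j) (snd j) \<omega>)) =
                (\<Prod>i\<in>Ms. indicator {a<..} (tau i (X0 i) \<omega>)) * exp (c * exit_time tau X0 i0 n \<omega>)" for \<omega>
    using split[of "\<lambda>i k. g (i, k) (tau i k \<omega>)"] i0(2)
    by (simp add: g_def exit_time_def exp_sum sum_distrib_left)
  show "integrable M (\<lambda>\<omega>. (\<Prod>i\<in>Ms. indicator {a<..} (tau i (X0 i) \<omega>)) * exp (c * exit_time tau X0 i0 n \<omega>) :: real)"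
    using integrable_prod_tau[OF J g_meas g_int] unfolding prod_g .
  have "(\<integral>\<omega>. (\<Prod>i\<in>Ms. indicator {a<..} (tau i (X0 i) \<omega>)) * exp (c * exit_time tau X0 i0 n \<omega>) \<partial>M) =
        (\<Prod>j\<in>J. \<integral>\<omega>. g j (tau (fst j) (snd j) \<omega>) \<partial>M)"
    using integral_prod_tau[OF J g_meas g_int] unfolding prod_g .
  also have "\<dots> = (\<Prod>i\<in>Ms. \<integral>\<omega>. g (i, X0 i) (tau i (X0 i) \<omega>) \<partial>M) *
                  (\<Prod>k\<in>{X0 i0..n}. \<integral>\<omega>. g (i0, k) (tau i0 k \<omega>) \<partial>M)"
    using split[of "\<lambda>i k. \<integral>\<omega>. g (i, k) (tau i k \<omega>) \<partial>M"] by simp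
  also have "\<dots> = (\<Prod>i\<in>Ms. exp (- a * F i (X0 i))) * (\<Prod>k\<in>{X0 i0..n}. F i0 k / (F i0 k - c))"
  proof (intro arg_cong2[where f="(*)"] prod.cong refl)
    show "(\<integral>\<omega>. g (i, X0 i) (tau i (X0 i) \<omega>) \<partial>M) = exp (- a * F i (X0 i))" if "i \<in> Ms" for i
      using that Ms tail(2)[of i "X0 i"] by (auto simp: g_def)
    show "(\<integral>\<omega>. g (i0, k) (tau i0 k \<omega>) \<partial>M) = F i0 k / (F i0 k - c)" if "k \<in> {X0 i0..n}" for k
      using that i0 mgf(2)[of i0 k c] c[of k] by (simp add: g_def)
  qed
  also have "(\<Prod>i\<in>Ms. exp (- a * F i (X0 i))) = exp (- a * (\<Sum>i\<in>Ms. F i (X0 i)))"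
    using finMs by (simp add: exp_sum sum_distrib_left)
  finally show "(\<integral>\<omega>. (\<Prod>i\<in>Ms. indicator {a<..} (tau i (X0 i) \<omega>)) * exp (c * exit_time tau X0 i0 n \<omega>) \<partial>M) =
                exp (- a * (\<Sum>i\<in>Ms. F i (X0 i))) * (\<Prod>k\<in>{X0 i0..n}. F i0 k / (F i0 k - c))" .
qed

definition rivals_slow :: "nat set \<Rightarrow> real \<Rightarrow> nat \<Rightarrow> nat \<Rightarrow> 'a set" where
  "rivals_slow Ms a x K =
     {\<omega>\<in>space M. (\<forall>i\<in>Ms. a < tau i (X0 i) \<omega>) \<and> exit_time tau X0 1 x \<omega> < a \<and>
                 (\<forall>j\<in>{1..A} - Ms - {1}. a < exit_time tau X0 j K \<omega>)}"

lemma sets_rivals_slow: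
  assumes "Ms \<subseteq> {1..A}"
  shows "rivals_slow Ms a x K \<in> sets M"
proof -
  have "finite Ms" using assms finite_subset by blast
  have first: "{\<omega>\<in>space M. \<forall>i\<in>Ms. a < tau i (X0 i) \<omega>} \<in> sets M"
  proof (intro sets.sets_Collect_finite_All[OF _ \<open>finite Ms\<close>])
    fix i assume "i \<in> Ms"
    with assms have "i \<in> {1..A}" by blast
    note [measurable] = tau_measurable[OF this order.refl]
    show "{\<omega>\<in>space M. a < tau i (X0 i) \<omega>} \<in> sets M" by measurable
  qed
  have others: "{\<omega>\<in>space M. \<forall>j\<in>{1..A} - Ms - {1}. a < exit_time tau X0 j K \<omega>} \<in> sets M"
  proof (intro sets.sets_Collect_finite_All)
    fix j assume "j \<in> {1..A} - Ms - {1}"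
    then have "j \<in> {1..A}" by blast
    note [measurable] = exit_time_measurable[OF this]
    show "{\<omega>\<in>space M. a < exit_time tau X0 j K \<omega>} \<in> sets M" by measurable
  qed auto
  have "{\<omega>\<in>space M. exit_time tau X0 1 x \<omega> < a} \<in> sets M"
    using exit_time_measurable[OF one_mem_agents] by measurable
  with first others show ?thesis
    unfolding rivals_slow_def by (auto intro: sets.sets_Collect_conj)
qed

lemma prob_rivals_slow_le_urn_tail:
  assumes "Ms \<subseteq> {1..A}"
  shows "prob (rivals_slow Ms a x K) \<le> urn_tail x"
proof (rule finite_measure_mono_AE[OF _ sets_urn_limit_gt])
  show "AE \<omega> in M. \<omega> \<in> rivals_slow Ms a x K \<longrightarrow> \<omega> \<in> {\<omega> \<in> space M. enat x < urn_limit tau X0 A 1 \<omega>}"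
    using AE_positive_sojourns
  proof eventually_elim
    case (elim \<omega>)
    show ?case
    proof
      assume "\<omega> \<in> rivals_slow Ms a x K"
      then show "\<omega> \<in> {\<omega> \<in> space M. enat x < urn_limit tau X0 A 1 \<omega>}"
        using enat_less_urn_limit_if_rivals_slow[OF elim A_pos] unfolding rivals_slow_def by blast
    qed
  qed
qed

text \<open>The two exponential terms are Chernoff bounds for the unlikely events
  \<open>a \<le> exit_time 1 x\<close> and \<open>exit_time j K \<le> a\<close>; after expanding, every term factorises under
  independence.\<close>

definition rivals_slow_test :: "nat set \<Rightarrow> real \<Rightarrow> real \<Rightarrow> nat \<Rightarrow> nat \<Rightarrow> 'a \<Rightarrow> real" where
  "rivals_slow_test Ms \<theta> a x K \<omega> =
     (\<Prod>i\<in>Ms. indicator {a<..} (tau i (X0 i) \<omega>)) *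
     (1 - exp (\<theta> * (exit_time tau X0 1 x \<omega> - a)) -
      (\<Sum>j\<in>{1..A} - Ms - {1}. exp (a - exit_time tau X0 j K \<omega>)))"

lemma rivals_slow_test_le_indicator:
  assumes "\<omega> \<in> space M" "0 \<le> \<theta>" "Ms \<subseteq> {1..A}"
  shows "rivals_slow_test Ms \<theta> a x K \<omega> \<le> indicator (rivals_slow Ms a x K) \<omega>"
proof (cases "\<forall>i\<in>Ms. a < tau i (X0 i) \<omega>")
  case True
  define R where "R = (\<Sum>j\<in>{1..A} - Ms - {1}. exp (a - exit_time tau X0 j K \<omega>))"
  have R: "0 \<le> R" unfolding R_def by (intro sum_nonneg) auto
  have "(\<Prod>i\<in>Ms. indicator {a<..} (tau i (X0 i) \<omega>) :: real) = 1"
    using True by (intro prod.neutral) auto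
  moreover have "1 - exp (\<theta> * (exit_time tau X0 1 x \<omega> - a)) - R \<le> 0"
    if "\<omega> \<notin> rivals_slow Ms a x K"
  proof -
    have "\<omega> \<in> rivals_slow Ms a x K"
      if "exit_time tau X0 1 x \<omega> < a" "\<forall>j\<in>{1..A} - Ms - {1}. a < exit_time tau X0 j K \<omega>"
      using that True assms(1) unfolding rivals_slow_def by blast
    with that have "a \<le> exit_time tau X0 1 x \<omega> \<or> (\<exists>j\<in>{1..A} - Ms - {1}. exit_time tau X0 j K \<omega> \<le> a)"
      unfolding not_less[symmetric] by blast
    then show ?thesis
    proof
      assume "a \<le> exit_time tau X0 1 x \<omega>"
      then have "1 \<le> exp (\<theta> * (exit_time tau X0 1 x \<omega> - a))" using assms(2) by simp
      then show ?thesis using R by linarith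
    next
      assume "\<exists>j\<in>{1..A} - Ms - {1}. exit_time tau X0 j K \<omega> \<le> a"
      then obtain j where j: "j \<in> {1..A} - Ms - {1}" "exit_time tau X0 j K \<omega> \<le> a" ..
      have "1 \<le> exp (a - exit_time tau X0 j K \<omega>)" using j(2) by simp
      also have "\<dots> \<le> R" unfolding R_def using j(1) by (intro member_le_sum) auto
      finally show ?thesis by (smt (verit) exp_gt_zero)
    qed
  qed
  moreover have "1 - exp (\<theta> * (exit_time tau X0 1 x \<omega> - a)) - R \<le> 1"
    using R by (smt (verit) exp_gt_zero)
  ultimately show ?thesis
    unfolding rivals_slow_test_def R_def[symmetric] by (cases "\<omega> \<in> rivals_slow Ms a x K") simp_all
next
  case False
  then obtain i where "i \<in> Ms" "\<not> a < tau i (X0 i) \<omega>" by blast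
  moreover have "finite Ms" using assms(3) finite_subset by blast
  ultimately have "(\<Prod>i\<in>Ms. indicator {a<..} (tau i (X0 i) \<omega>) :: real) = 0"
    by (intro prod_zero bexI[of _ i]) auto
  then show ?thesis unfolding rivals_slow_test_def by simp
qed

lemma
  assumes Ms: "Ms \<subseteq> {1..A}" "1 \<notin> Ms" and a: "0 \<le> a" and \<theta>: "\<And>k. X0 1 \<le> k \<Longrightarrow> \<theta> < F 1 k"
  shows integrable_rivals_slow_test: "integrable M (rivals_slow_test Ms \<theta> a x K)"
    and integral_rivals_slow_test: "(\<integral>\<omega>. rivals_slow_test Ms \<theta> a x K \<omega> \<partial>M) =
           exp (- a * (\<Sum>i\<in>Ms. F i (X0 i))) *
           (1 - exp (- \<theta> * a) * (\<Prod>k\<in>{X0 1..x}. F 1 k / (F 1 k - \<theta>))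
              - (\<Sum>j\<in>{1..A} - Ms - {1}. exp a * (\<Prod>k\<in>{X0 j..K}. F j k / (F j k + 1))))"
proof -
  define Jn where "Jn = {1..A} - Ms - {1}"
  define Y where "Y \<omega> = (\<Prod>i\<in>Ms. indicator {a<..} (tau i (X0 i) \<omega>) :: real)" for \<omega>
  have Jn: "j \<in> {1..A}" "j \<notin> Ms" if "j \<in> Jn" for j using that unfolding Jn_def by auto
  have F1: "\<And>k. X0 1 \<le> k \<Longrightarrow> 0 < F 1 k" using F_pos_level[OF one_mem_agents] .
  have FJ: "\<And>k. X0 j \<le> k \<Longrightarrow> - 1 < F j k" if "j \<in> Jn" for j
    using F_pos_level[OF Jn(1)[OF that]] by force
  note moment = integrable_first_sojourns_gt_exp_exit_time[OF Ms(1) _ _ a, folded Y_def]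
    integral_first_sojourns_gt_exp_exit_time[OF Ms(1) _ _ a, folded Y_def]
  have test_eq: "rivals_slow_test Ms \<theta> a x K = (\<lambda>\<omega>. Y \<omega> * exp (0 * exit_time tau X0 1 x \<omega>)
      - exp (- \<theta> * a) * (Y \<omega> * exp (\<theta> * exit_time tau X0 1 x \<omega>))
      - (\<Sum>j\<in>Jn. exp a * (Y \<omega> * exp ((- 1) * exit_time tau X0 j K \<omega>))))"
    unfolding rivals_slow_test_def Y_def Jn_def
    by (simp add: fun_eq_iff algebra_simps exp_diff exp_minus sum_distrib_left field_simps)
  have int: "integrable M (\<lambda>\<omega>. Y \<omega> * exp (0 * exit_time tau X0 1 x \<omega>))"
    "integrable M (\<lambda>\<omega>. Y \<omega> * exp (\<theta> * exit_time tau X0 1 x \<omega>))"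
    "\<And>j. j \<in> Jn \<Longrightarrow> integrable M (\<lambda>\<omega>. Y \<omega> * exp ((- 1) * exit_time tau X0 j K \<omega>))"
    using moment(1)[OF one_mem_agents Ms(2) F1] moment(1)[OF one_mem_agents Ms(2) \<theta>]
      moment(1)[OF Jn FJ] by auto
  then show "integrable M (rivals_slow_test Ms \<theta> a x K)"
    unfolding test_eq by (simp add: Bochner_Integration.integrable_diff Bochner_Integration.integrable_sum)
  have "(\<integral>\<omega>. rivals_slow_test Ms \<theta> a x K \<omega> \<partial>M) = (\<integral>\<omega>. Y \<omega> * exp (0 * exit_time tau X0 1 x \<omega>) \<partial>M)
      - exp (- \<theta> * a) * (\<integral>\<omega>. Y \<omega> * exp (\<theta> * exit_time tau X0 1 x \<omega>) \<partial>M)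
      - (\<Sum>j\<in>Jn. exp a * (\<integral>\<omega>. Y \<omega> * exp ((- 1) * exit_time tau X0 j K \<omega>) \<partial>M))"
    unfolding test_eq using int by (simp add: Bochner_Integration.integral_diff Bochner_Integration.integral_sum
        Bochner_Integration.integrable_diff Bochner_Integration.integrable_sum)
  also have "\<dots> = exp (- a * (\<Sum>i\<in>Ms. F i (X0 i))) *
           (1 - exp (- \<theta> * a) * (\<Prod>k\<in>{X0 1..x}. F 1 k / (F 1 k - \<theta>))
              - (\<Sum>j\<in>Jn. exp a * (\<Prod>k\<in>{X0 j..K}. F j k / (F j k + 1))))"
  proof -
    have "(\<Prod>k\<in>{X0 1..x}. F 1 k / (F 1 k - 0)) = 1" using F1 by (intro prod.neutral) force
    then have "(\<integral>\<omega>. Y \<omega> * exp (0 * exit_time tau X0 1 x \<omega>) \<partial>M) = exp (- a * (\<Sum>i\<in>Ms. F i (X0 i)))"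
      using moment(2)[OF one_mem_agents Ms(2) F1, of x] by simp
    moreover have "(\<integral>\<omega>. Y \<omega> * exp ((- 1) * exit_time tau X0 j K \<omega>) \<partial>M) =
                   exp (- a * (\<Sum>i\<in>Ms. F i (X0 i))) * (\<Prod>k\<in>{X0 j..K}. F j k / (F j k + 1))" if "j \<in> Jn" for j
      using moment(2)[OF Jn[OF that] FJ[OF that], of K] by simp
    ultimately show ?thesis
      using moment(2)[OF one_mem_agents Ms(2) \<theta>, of x] by (simp add: sum_distrib_left algebra_simps)
  qed
  finally show "(\<integral>\<omega>. rivals_slow_test Ms \<theta> a x K \<omega> \<partial>M) =
           exp (- a * (\<Sum>i\<in>Ms. F i (X0 i))) *
           (1 - exp (- \<theta> * a) * (\<Prod>k\<in>{X0 1..x}. F 1 k / (F 1 k - \<theta>))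
              - (\<Sum>j\<in>{1..A} - Ms - {1}. exp a * (\<Prod>k\<in>{X0 j..K}. F j k / (F j k + 1))))"
    unfolding Jn_def .
qed

lemma prob_rivals_slow_ge:
  assumes Ms: "Ms \<subseteq> {1..A}" "1 \<notin> Ms" and a: "0 \<le> a"
    and \<theta>: "0 < \<theta>" "\<And>k. X0 1 \<le> k \<Longrightarrow> \<theta> < F 1 k"
  shows "exp (- a * (\<Sum>i\<in>Ms. F i (X0 i))) *
           (1 - exp (- \<theta> * a) * (\<Prod>k\<in>{X0 1..x}. F 1 k / (F 1 k - \<theta>))
              - (\<Sum>j\<in>{1..A} - Ms - {1}. exp a * (\<Prod>k\<in>{X0 j..K}. F j k / (F j k + 1))))
         \<le> prob (rivals_slow Ms a x K)"
proof -
  have "integrable M (indicator (rivals_slow Ms a x K) :: 'a \<Rightarrow> real)"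
    using sets_rivals_slow[OF Ms(1)] by (intro integrable_const_bound[where B=1]) (auto simp: indicator_def)
  moreover have "rivals_slow_test Ms \<theta> a x K \<omega> \<le> indicator (rivals_slow Ms a x K) \<omega>" if "\<omega> \<in> space M" for \<omega>
    using rivals_slow_test_le_indicator[OF that _ Ms(1)] \<theta>(1) by simp
  ultimately have "(\<integral>\<omega>. rivals_slow_test Ms \<theta> a x K \<omega> \<partial>M) \<le> (\<integral>\<omega>. indicator (rivals_slow Ms a x K) \<omega> \<partial>M)"
    using integrable_rivals_slow_test[OF Ms a \<theta>(2)] by (intro integral_mono) auto
  also have "\<dots> = prob (rivals_slow Ms a x K)" using sets_rivals_slow[OF Ms(1)] by simp
  finally show ?thesis by (simp only: integral_rivals_slow_test[OF Ms a \<theta>(2)])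
qed

end

section \<open>Asymptotics\<close>

locale explosive_urn_model = urn_model +
  fixes Ms :: "nat set"
  assumes Ms_def: "Ms = {i \<in> {1..A}. summable (\<lambda>k. 1 / F i (Suc k))}"
    and one_not_in_Ms: "1 \<notin> Ms"
    and filterlim_F1: "filterlim (F 1) at_top sequentially"
    and strict_mono_F: "\<And>i. i \<in> Ms \<Longrightarrow> strict_mono_on {1..} (F i)"
begin

abbreviation explosive_rate :: real where
  "explosive_rate \<equiv> \<Sum>i\<in>Ms. F i (X0 i)"

abbreviation mean_exit_time :: "nat \<Rightarrow> real" where
  "mean_exit_time x \<equiv> \<Sum>k\<in>{X0 1..x}. 1 / F 1 k"

lemma Ms_subset: "Ms \<subseteq> {1..A}"
  unfolding Ms_def by blast

lemma filterlim_sum_inverse_F_at_top: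
  assumes "j \<in> {1..A}" "j \<notin> Ms"
  shows "filterlim (\<lambda>n. \<Sum>k\<in>{X0 j..n}. 1 / F j k) at_top sequentially"
  using assms F_pos X0_pos unfolding Ms_def by (intro filterlim_sum_at_top_if_not_summable) auto

lemma filterlim_mean_exit_time: "filterlim mean_exit_time at_top sequentially"
  by (rule filterlim_sum_inverse_F_at_top[OF one_mem_agents one_not_in_Ms])

lemma explosive_rate_nonneg: "0 \<le> explosive_rate"
  using F_pos_level Ms_subset by (intro sum_nonneg) (auto simp: less_imp_le subset_iff)

lemma mean_exit_time_nonneg: "0 \<le> mean_exit_time x"
  using F_pos_level[OF one_mem_agents] by (intro sum_nonneg) (simp add: less_imp_le)

text \<open>Chernoff bound for agent 1 being late: its exit time from level x exceeds
  \<open>(1 + \<epsilon>) * mean_exit_time x\<close>.\<close>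

lemma eventually_late_exit_bound:
  assumes \<theta>: "0 < \<theta>" "\<And>k. X0 1 \<le> k \<Longrightarrow> \<theta> < F 1 k" and \<epsilon>: "0 < \<epsilon>"
  shows "eventually (\<lambda>x. exp (- \<theta> * ((1 + \<epsilon>) * mean_exit_time x)) *
                           (\<Prod>k\<in>{X0 1..x}. F 1 k / (F 1 k - \<theta>)) \<le> 1 / 4) sequentially"
proof -
  obtain C where C: "\<And>x. (\<Sum>k\<in>{X0 1..x}. \<theta> / (F 1 k - \<theta>)) \<le> C + (1 + \<epsilon> / 2) * (\<Sum>k\<in>{X0 1..x}. \<theta> / F 1 k)"
    using sum_div_diff_le_plus_const[OF filterlim_F1 \<theta>, where \<delta>="\<epsilon> / 2"] \<epsilon> by auto
  have "eventually (\<lambda>x. (C + ln 4) / (\<theta> * \<epsilon> / 2) \<le> mean_exit_time x) sequentially"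
    using filterlim_mean_exit_time unfolding filterlim_at_top by blast
  then show ?thesis
  proof eventually_elim
    case (elim x)
    have "(\<Prod>k\<in>{X0 1..x}. F 1 k / (F 1 k - \<theta>)) \<le> exp (\<Sum>k\<in>{X0 1..x}. \<theta> / (F 1 k - \<theta>))"
      using \<theta> by (intro prod_div_diff_le_exp_sum) auto
    also have "\<dots> \<le> exp (C + (1 + \<epsilon> / 2) * (\<theta> * mean_exit_time x))"
      using C[of x] by (simp add: sum_distrib_left)
    finally have "exp (- \<theta> * ((1 + \<epsilon>) * mean_exit_time x)) * (\<Prod>k\<in>{X0 1..x}. F 1 k / (F 1 k - \<theta>))
                  \<le> exp (- \<theta> * ((1 + \<epsilon>) * mean_exit_time x)) * exp (C + (1 + \<epsilon> / 2) * (\<theta> * mean_exit_time x))"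
      by (intro mult_left_mono) auto
    also have "\<dots> = exp (C - \<theta> * \<epsilon> / 2 * mean_exit_time x)"
      by (simp add: exp_add[symmetric] algebra_simps)
    also have "\<dots> \<le> exp (- ln 4)"
      using elim \<theta>(1) \<epsilon> by (simp add: field_simps)
    finally show ?case by (simp add: exp_minus)
  qed
qed

text \<open>Chernoff bound for some non-explosive agent other than 1 leaving level K before time a.\<close>

lemma ex_level_rivals_early_bound:
  "\<exists>K. (\<Sum>j\<in>{1..A} - Ms - {1}. exp a * (\<Prod>k\<in>{X0 j..K}. F j k / (F j k + 1))) \<le> 1 / 4"
proof -
  define Jn where "Jn = {1..A} - Ms - {1}"
  define B where "B = 4 * (real (card Jn) + 1) * exp a"
  have "eventually (\<lambda>K. \<forall>j\<in>Jn. B \<le> (\<Sum>k\<in>{X0 j..K}. 1 / F j k)) sequentially"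
    using filterlim_sum_inverse_F_at_top unfolding Jn_def filterlim_at_top
    by (intro eventually_ball_finite) auto
  then obtain K where K: "\<forall>j\<in>Jn. B \<le> (\<Sum>k\<in>{X0 j..K}. 1 / F j k)"
    unfolding eventually_sequentially by blast
  have "exp a * (\<Prod>k\<in>{X0 j..K}. F j k / (F j k + 1)) \<le> 1 / (4 * (real (card Jn) + 1))" if "j \<in> Jn" for j
  proof -
    have B: "0 < B" unfolding B_def by simp
    have j: "j \<in> {1..A}" using that unfolding Jn_def by blast
    have "(\<Prod>k\<in>{X0 j..K}. F j k / (F j k + 1)) \<le> 1 / (\<Sum>k\<in>{X0 j..K}. 1 / F j k)"
      using F_pos_level[OF j] K that B by (intro prod_div_add_le_inverse_sum) force+
    also have "\<dots> \<le> 1 / B" using K that B by (intro divide_left_mono) auto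
    finally have "exp a * (\<Prod>k\<in>{X0 j..K}. F j k / (F j k + 1)) \<le> exp a * (1 / B)"
      by (intro mult_left_mono) auto
    also have "\<dots> = 1 / (4 * (real (card Jn) + 1))" unfolding B_def by simp
    finally show ?thesis .
  qed
  then have "(\<Sum>j\<in>Jn. exp a * (\<Prod>k\<in>{X0 j..K}. F j k / (F j k + 1))) \<le> real (card Jn) / (4 * (real (card Jn) + 1))"
    using sum_mono[of Jn _ "\<lambda>_. 1 / (4 * (real (card Jn) + 1))"] by simp
  also have "\<dots> \<le> 1 / 4" by (simp add: field_simps)
  finally show ?thesis unfolding Jn_def by blast
qed

lemma eventually_neg_ln_urn_tail_le:
  assumes \<epsilon>: "0 < \<epsilon>"
  shows "eventually (\<lambda>x. 0 < urn_tail x \<and>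
           - ln (urn_tail x) \<le> (1 + \<epsilon>) * (explosive_rate * mean_exit_time x) + ln 2) sequentially"
proof -
  obtain \<theta> where \<theta>: "0 < \<theta>" "\<And>k. X0 1 \<le> k \<Longrightarrow> \<theta> < F 1 k"
    using ex_pos_less_if_filterlim_at_top[OF filterlim_F1 F_pos_level[OF one_mem_agents]] by blast
  have "eventually (\<lambda>x. exp (- \<theta> * ((1 + \<epsilon>) * mean_exit_time x)) *
                           (\<Prod>k\<in>{X0 1..x}. F 1 k / (F 1 k - \<theta>)) \<le> 1 / 4) sequentially"
    using \<theta> \<epsilon> by (rule eventually_late_exit_bound)
  then show ?thesis
  proof eventually_elim
    case (elim x)
    define a where "a = (1 + \<epsilon>) * mean_exit_time x"
    have a: "0 \<le> a" using \<epsilon> mean_exit_time_nonneg by (simp add: a_def)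
    obtain K where K: "(\<Sum>j\<in>{1..A} - Ms - {1}. exp a * (\<Prod>k\<in>{X0 j..K}. F j k / (F j k + 1))) \<le> 1 / 4"
      using ex_level_rivals_early_bound by blast
    have "exp (- a * explosive_rate) / 2 \<le> exp (- a * explosive_rate) *
            (1 - exp (- \<theta> * a) * (\<Prod>k\<in>{X0 1..x}. F 1 k / (F 1 k - \<theta>))
               - (\<Sum>j\<in>{1..A} - Ms - {1}. exp a * (\<Prod>k\<in>{X0 j..K}. F j k / (F j k + 1))))"
    proof -
      have "1 / 2 \<le> 1 - exp (- \<theta> * a) * (\<Prod>k\<in>{X0 1..x}. F 1 k / (F 1 k - \<theta>))
               - (\<Sum>j\<in>{1..A} - Ms - {1}. exp a * (\<Prod>k\<in>{X0 j..K}. F j k / (F j k + 1)))"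
        using elim K unfolding a_def by linarith
      then have "exp (- a * explosive_rate) * (1 / 2) \<le> exp (- a * explosive_rate) *
            (1 - exp (- \<theta> * a) * (\<Prod>k\<in>{X0 1..x}. F 1 k / (F 1 k - \<theta>))
               - (\<Sum>j\<in>{1..A} - Ms - {1}. exp a * (\<Prod>k\<in>{X0 j..K}. F j k / (F j k + 1))))"
        by (rule mult_left_mono) simp
      then show ?thesis by (simp only: times_divide_eq_right mult_1_right)
    qed
    also have "\<dots> \<le> prob (rivals_slow Ms a x K)"
      by (rule prob_rivals_slow_ge[OF Ms_subset one_not_in_Ms a \<theta>])
    also have "\<dots> \<le> urn_tail x"
      by (rule prob_rivals_slow_le_urn_tail[OF Ms_subset])
    finally have bound: "exp (- a * explosive_rate) / 2 \<le> urn_tail x" .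
    moreover have "0 < exp (- a * explosive_rate) / 2" by simp
    ultimately have pos: "0 < urn_tail x" by linarith
    have "- a * explosive_rate - ln 2 = ln (exp (- a * explosive_rate) / 2)" by (simp add: ln_div)
    also have "\<dots> \<le> ln (urn_tail x)" using bound by (rule ln_mono) simp
    finally show ?case using pos unfolding a_def by (simp add: algebra_simps)
  qed
qed

lemma ex_urn_tail_le:
  assumes \<delta>: "0 < \<delta>" "\<delta> < 1"
  shows "\<exists>C>0. \<forall>x. urn_tail x \<le> C * (\<Prod>k\<in>{X0 1..x}. F 1 k / (F 1 k + (1 - \<delta>) * explosive_rate))"
proof -
  define \<theta> where "\<theta> i = (1 - \<delta>) * F i (X0 i)" for i
  define C where "C i = exp (\<theta> i / \<delta> * (\<Sum>k. 1 / F i (Suc k)))" for i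
  have i: "i \<in> {1..A}" "summable (\<lambda>k. 1 / F i (Suc k))" if "i \<in> Ms" for i
    using that unfolding Ms_def by auto
  have F_ge: "F i (X0 i) \<le> F i k" if "i \<in> Ms" "X0 i \<le> k" for i k
  proof (cases "X0 i = k")
    case False
    then have "F i (X0 i) < F i k"
      using X0_pos[OF i(1)[OF that(1)]] that(2)
      by (intro strict_mono_onD[OF strict_mono_F[OF that(1)]]) auto
    then show ?thesis by simp
  qed simp
  have \<theta>: "0 \<le> \<theta> i \<and> \<theta> i < F i k" if "i \<in> Ms" "X0 i \<le> k" for i k
    using F_ge[OF that] F_pos_level[OF i(1)[OF that(1)] order.refl] \<delta>
    by (simp add: \<theta>_def algebra_simps) (smt (verit) mult_pos_pos)
  have "(\<Prod>k\<in>{X0 i..N}. F i k / (F i k - \<theta> i)) \<le> C i" if "i \<in> Ms" for i N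
    unfolding \<theta>_def C_def using F_pos i[OF that] X0_pos F_ge[OF that] \<delta>
    by (intro prod_div_diff_le_exp_suminf) auto
  from urn_tail_le[OF Ms_subset one_not_in_Ms \<theta> this]
  have "urn_tail x \<le> (\<Prod>i\<in>Ms. C i) * (\<Prod>k\<in>{X0 1..x}. F 1 k / (F 1 k + (1 - \<delta>) * explosive_rate))" for x
    by (simp add: \<theta>_def sum_distrib_left)
  moreover have "0 < (\<Prod>i\<in>Ms. C i)" unfolding C_def by (intro prod_pos) auto
  ultimately show ?thesis by blast
qed

lemma ex_neg_ln_urn_tail_ge:
  assumes \<epsilon>: "0 < \<epsilon>" "\<epsilon> < 1"
  shows "\<exists>C. \<forall>x. 0 < urn_tail x \<longrightarrow> (1 - \<epsilon>) * (explosive_rate * mean_exit_time x) - C \<le> - ln (urn_tail x)"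
proof -
  define \<delta> where "\<delta> = \<epsilon> / 2"
  have \<delta>: "0 < \<delta>" "\<delta> < 1" "1 - \<epsilon> \<le> (1 - \<delta>) * (1 - \<delta>)" using \<epsilon> by (auto simp: \<delta>_def algebra_simps)
  define c where "c = (1 - \<delta>) * explosive_rate"
  have c: "0 \<le> c" unfolding c_def using \<delta> explosive_rate_nonneg by simp
  obtain C1 where C1: "0 < C1"
    "\<And>x. urn_tail x \<le> C1 * (\<Prod>k\<in>{X0 1..x}. F 1 k / (F 1 k + c))"
    using ex_urn_tail_le[OF \<delta>(1,2)] unfolding c_def by blast
  obtain C2 where C2: "\<And>x. (1 - \<delta>) * (\<Sum>k\<in>{X0 1..x}. c / F 1 k) \<le> C2 + (\<Sum>k\<in>{X0 1..x}. ln (1 + c / F 1 k))"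
    using sum_ln_one_plus_ge_minus_const[OF filterlim_F1 F_pos_level[OF one_mem_agents] c, where \<delta>=\<delta>] \<delta> by auto
  have "(1 - \<epsilon>) * (explosive_rate * mean_exit_time x) - (ln C1 + C2) \<le> - ln (urn_tail x)"
    if pos: "0 < urn_tail x" for x
  proof -
    define P where "P = (\<Prod>k\<in>{X0 1..x}. F 1 k / (F 1 k + c))"
    have P: "0 < P" unfolding P_def using F_pos_level[OF one_mem_agents] c
      by (intro prod_pos divide_pos_pos add_pos_nonneg) auto
    have "urn_tail x \<le> C1 * P" unfolding P_def by (rule C1(2))
    then have "ln (urn_tail x) \<le> ln (C1 * P)" using pos by (rule ln_mono)
    then have "ln (urn_tail x) \<le> ln C1 + ln P" using C1(1) P by (simp add: ln_mult)
    moreover have "- ln P = (\<Sum>k\<in>{X0 1..x}. ln (1 + c / F 1 k))"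
      unfolding P_def using F_pos_level[OF one_mem_agents] c by (intro neg_ln_prod_div_add) auto
    moreover have "(1 - \<epsilon>) * (explosive_rate * mean_exit_time x) \<le> (1 - \<delta>) * (\<Sum>k\<in>{X0 1..x}. c / F 1 k)"
    proof -
      have "0 \<le> explosive_rate * mean_exit_time x"
        using explosive_rate_nonneg mean_exit_time_nonneg by simp
      then have "(1 - \<epsilon>) * (explosive_rate * mean_exit_time x) \<le> (1 - \<delta>) * (1 - \<delta>) * (explosive_rate * mean_exit_time x)"
        using \<delta>(3) by (intro mult_right_mono) auto
      also have "\<dots> = (1 - \<delta>) * (c * mean_exit_time x)" unfolding c_def by (simp only: mult.assoc)
      also have "c * mean_exit_time x = (\<Sum>k\<in>{X0 1..x}. c / F 1 k)" by (simp add: sum_distrib_left)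
      finally show ?thesis .
    qed
    ultimately show ?thesis using C2[of x] by linarith
  qed
  then show ?thesis by blast
qed

lemma asymp_equiv_neg_ln_urn_tail:
  assumes "Ms \<noteq> {}"
  shows "(\<lambda>x. - ln (urn_tail x)) \<sim>[at_top] (\<lambda>x. explosive_rate * mean_exit_time x)"
proof -
  have "0 < explosive_rate"
    using assms Ms_subset F_pos_level by (intro sum_pos) (auto intro: finite_subset)
  then have "filterlim (\<lambda>x. explosive_rate * mean_exit_time x) at_top sequentially"
    by (intro filterlim_tendsto_pos_mult_at_top[OF tendsto_const] filterlim_mean_exit_time)
  then show ?thesis
  proof (rule asymp_equiv_sequentially_if_bounds)
    fix \<epsilon> :: real assume "0 < \<epsilon>"
    have "eventually (\<lambda>x. - ln (urn_tail x) \<le> (1 + \<epsilon>) * (explosive_rate * mean_exit_time x) + ln 2) sequentially"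
      using eventually_neg_ln_urn_tail_le[OF \<open>0 < \<epsilon>\<close>] by (rule eventually_mono) (rule conjunct2)
    then show "\<exists>C. eventually (\<lambda>x. - ln (urn_tail x) \<le> (1 + \<epsilon>) * (explosive_rate * mean_exit_time x) + C) sequentially" ..
  next
    fix \<epsilon> :: real assume "0 < \<epsilon>" "\<epsilon> < 1"
    obtain C where C: "\<And>x. 0 < urn_tail x \<Longrightarrow> (1 - \<epsilon>) * (explosive_rate * mean_exit_time x) - C \<le> - ln (urn_tail x)"
      using ex_neg_ln_urn_tail_ge[OF \<open>0 < \<epsilon>\<close> \<open>\<epsilon> < 1\<close>] by blast
    have "eventually (\<lambda>x. 0 < urn_tail x) sequentially"
      using eventually_neg_ln_urn_tail_le[OF zero_less_one] by (rule eventually_mono) (rule conjunct1)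
    then have "eventually (\<lambda>x. (1 - \<epsilon>) * (explosive_rate * mean_exit_time x) - C \<le> - ln (urn_tail x)) sequentially"
      by (rule eventually_mono) (rule C)
    then show "\<exists>C. eventually (\<lambda>x. (1 - \<epsilon>) * (explosive_rate * mean_exit_time x) - C \<le> - ln (urn_tail x)) sequentially" ..
  qed
qed

end

theorem theorem4:
  fixes M :: "'a measure" and tau :: "nat \<Rightarrow> nat \<Rightarrow> 'a \<Rightarrow> real"
    and F :: "nat \<Rightarrow> nat \<Rightarrow> real" and X0 :: "nat \<Rightarrow> nat" and A :: nat
    and Mset :: "nat set"
  assumes "prob_space M"
    and "A \<ge> 2"
    and F_pos: "\<And>i k. i \<in> {1..A} \<Longrightarrow> k \<ge> 1 \<Longrightarrow> F i k > 0"
    and X0_pos: "\<And>i. i \<in> {1..A} \<Longrightarrow> X0 i \<ge> 1"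
    and indep: "prob_space.indep_vars M (\<lambda>_. borel) (\<lambda>(i, k). tau i k)
                  {(i, k). i \<in> {1..A} \<and> X0 i \<le> k}"
    and expo: "\<And>i k. i \<in> {1..A} \<Longrightarrow> X0 i \<le> k \<Longrightarrow> distributed M lborel (tau i k) (exponential_density (F i k))"
    and Mset_def: "Mset = {i \<in> {1..A}. summable (\<lambda>k. 1 / F i (Suc k))}"
    and "Mset \<noteq> {}"
    and "1 \<notin> Mset"
    and "filterlim (F 1) at_top sequentially"
    and mono: "\<And>i. i \<in> Mset \<Longrightarrow>
                 strict_mono_on {1..} (F i) \<or> (\<forall>j k. 1 \<le> j \<longrightarrow> j < k \<longrightarrow> F i k < F i j)"
  shows "(\<lambda>x::nat. - ln (measure M {\<omega> \<in> space M. urn_limit tau X0 A 1 \<omega> > enat x}))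
           \<sim>[at_top] (\<lambda>x. (\<Sum>i\<in>Mset. F i (X0 i)) * (\<Sum>k\<in>{X0 1..x}. 1 / F 1 k))"
proof -
  have increasing: "strict_mono_on {1..} (F i)" if "i \<in> Mset" for i
  proof -
    have i: "i \<in> {1..A}" "summable (\<lambda>k. 1 / F i (Suc k))" using that unfolding Mset_def by auto
    show ?thesis
      using mono[OF that] not_summable_inverse_if_decreasing[of "F i"] F_pos[OF i(1)] i(2) by blast
  qed
  interpret explosive_urn_model M tau F X0 A Mset
    by (intro explosive_urn_model.intro urn_model.intro urn_model_axioms.intro
        explosive_urn_model_axioms.intro) (use assms increasing in auto)
  show ?thesis using asymp_equiv_neg_ln_urn_tail[OF \<open>Mset \<noteq> {}\<close>] by simp
qed

end
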